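(* (i) Let $v=(v_1,\dots,v_d)$ with $v_i\in\mathcal{L}((\mathbb{R}^d))$, and let $\mathbf{X}$ be an sgrp over $\mathbb{R}^d$ on $[0,T]$. The unique solution of $$\dot{\mathbf{Z}}_t=\mathbf{Z}_t\otimes(T_v\dot{\mathbf{X}}_{t,t}),\qquad\mathbf{Z}_0=T_v\mathbf{X}_0$$ takes values in $G(\mathbb{R}^d)$, is again an sgrp, and $\mathbf{Z}_t=T_v(\mathbf{X}_t)$, $\mathbf{Z}_{s,t}=T_v(\mathbf{X}_{s,t})$. If $\mathbf{X}$ is an sgrm, applying this to $t\mapsto\mathbf{X}_{0,t}$ yields an sgrm $\mathbf{Z}$ with $\mathbf{Z}_{s,t}=T_v(\mathbf{X}_{s,t})$. (ii) Let now $v_i\in\mathcal{L}(\mathbb{R}^d)$ for all $i$ and let $\mathbf{X}$ be a good sgrm. Then $\mathbf{Z}$ from (i) is a good sgrm. More specifically, let $N'$ be the smallest integer with $v_i\in\mathcal{L}^{N'}(\mathbb{R}^d)$ for all $i$, assume $\mathbf{X}=\mathrm{MinExt}(\mathbf{Y})$ for an $N$-sgrm $\mathbf{Y}$, and let $M=N\cdot N'$. Then the unique solution of $\dot{\mathbf{W}}_t=\mathbf{W}_t\otimes_M(T_v\dot{\mathbf{Y}}_{t,t})$, $\mathbf{W}_0=\mathbf{1}$, is an $M$-sgrp; writing $\mathcal{T}_v[\mathbf{Y}]_{s,t}:=\mathbf{W}_s^{-1}\otimes_M\mathbf{W}_t$ for its associated $M$-sgrm, one has $$\mathcal{T}_v[\mathbf{Y}]_{s,t}=T_v^M(\mathbf{Y}^M_{s,t})=\mathrm{proj}_M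 T_v(\mathbf{X}_{s,t}),$$ where $T_v^M:=\mathrm{proj}_M\circ T_v\circ\mathfrak{i}^M$ is an algebra endomorphism of $(T^M(\mathbb{R}^d),\otimes_M)$, $\mathfrak{i}^M:T^M(\mathbb{R}^d)\to T((\mathbb{R}^d))$ is the linear embedding, and $\mathbf{Y}^M=\mathrm{proj}_M\mathrm{MinExt}(\mathbf{Y})$.
   Context: Fix $T>0$, $d\ge1$. $T((\mathbb{R}^d))$: formal tensor series over words in $\{1,\dots,d\}$ (incl. empty word, unit $\mathbf{1}$), concatenation $\otimes$; $\langle\mathbf{x},w\rangle$ coefficient of $w$. $T^N(\mathbb{R}^d)$: span of words of length $\le N$, quotient algebra with product $\otimes_N$, projection $\mathrm{proj}_N$. Shuffle: bilinear, unit $\mathbf{1}$, $wi\sqcup\!\sqcup vj=(w\sqcup\!\sqcup vj)i+(wi\sqcup\!\sqcup v)j$. $G(\mathbb{R}^d)$: series with $\langle\mathbf{x},\mathbf{1}\rangle=1$ and $\langle\mathbf{x},v\sqcup\!\sqcup w\rangle=\langle\mathbf{x},v\rangle\langle\mathbf{x},w\rangle$. $\mathcal{L}(\mathbb{R}^d)$ Lie polynomials generated by $e_1,\dots,e_d$; $\mathcal{L}^N(\mathbb{R}^d)=\mathrm{proj}_N\mathcal{L}(\mathbb{R}^d)$; $\mathcal{L}((\mathbb{R}^d))$ Lie series. For $v=(v_1,\dots,v_d)\subset\mathcal{L}((\mathbb{R}^d))$, $T_v$ is the $\otimes$-algebra endomorphism of $T((\mathbb{R}^d))$ (continuous for coordinatewise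 convergence) extending $e_i\mapsto e_i+v_i$. $N$-sgrp: non-zero path $\mathbf{X}:[0,T]\to T^N(\mathbb{R}^d)$ with $\langle\mathbf{X}_t,v\sqcup\!\sqcup w\rangle=\langle\mathbf{X}_t,v\rangle\langle\mathbf{X}_t,w\rangle$ ($|v|+|w|\le N$) and smooth coordinates; sgrp: same in $T((\mathbb{R}^d))$ for all words. $N$-sgrm: non-zero $\mathbf{X}:[0,T]^2\to T^N(\mathbb{R}^d)$ with the shuffle relation for each $\mathbf{X}_{s,t}$, $\mathbf{X}_{s,u}\otimes_N\mathbf{X}_{u,t}=\mathbf{X}_{s,t}$, and smooth $t\mapsto\langle\mathbf{X}_{s,t},w\rangle$; sgrm: same in $T((\mathbb{R}^d))$ with $\otimes$. A path determines a model via $\mathbf{X}_{s,t}=\mathbf{X}_s^{-1}\otimes\mathbf{X}_t$ (resp. $\otimes_N$). Diagonal derivative $\dot{\mathbf{X}}_{s,s}=\partial_t|_{t=s}\mathbf{X}_{s,t}$. $\mathrm{MinExt}(\mathbf{Y})$ of an $N$-sgrm $\mathbf{Y}$: the unique sgrm agreeing with $\mathbf{Y}$ on words of length $\le N$ with diagonal derivative in $\mathcal{L}^N(\mathbb{R}^d)$ for all times. An sgrm is good if it equals $\mathrm{MinExt}(\mathbf{Y})$ for some $N$ and some $N$-sgrm $\mathbf{Y}$. *)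

theory Defs
  imports "HOL-Analysis.Analysis"
begin

text \<open>Words over the alphabet {1..d} are lists of naturals; a (formal) tensor series
  is a coefficient function on words.  Series over R^d vanish on words with a letter
  outside {1..d}.\<close>

type_synonym word = "nat list"
type_synonym tseries = "nat list \<Rightarrow> real"

definition words :: "nat \<Rightarrow> word set" where
  "words d = {w. set w \<subseteq> {1..d}}"

definition tser :: "nat \<Rightarrow> tseries \<Rightarrow> bool" where
  "tser d x \<longleftrightarrow> (\<forall>w. w \<notin> words d \<longrightarrow> x w = 0)"

definition tzero :: tseries where
  "tzero = (\<lambda>w. 0)"

definition tunit :: tseries where
  "tunit = (\<lambda>w. if w = [] then 1 else 0)"

definition letter :: "nat \<Rightarrow> tseries" where
  "letter i = (\<lambda>w. if w = [i] then 1 else 0)"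

definition trunc :: "nat \<Rightarrow> tseries \<Rightarrow> tseries" where
  "trunc N x = (\<lambda>w. if length w \<le> N then x w else 0)"

definition inTN :: "nat \<Rightarrow> nat \<Rightarrow> tseries \<Rightarrow> bool" where
  "inTN d N x \<longleftrightarrow> tser d x \<and> (\<forall>w. N < length w \<longrightarrow> x w = 0)"

definition tmul :: "tseries \<Rightarrow> tseries \<Rightarrow> tseries" where
  "tmul x y = (\<lambda>w. \<Sum>i\<le>length w. x (take i w) * y (drop i w))"

definition tmulN :: "nat \<Rightarrow> tseries \<Rightarrow> tseries \<Rightarrow> tseries" where
  "tmulN N x y = trunc N (tmul x y)"

fun tprod :: "tseries list \<Rightarrow> tseries" where
  "tprod [] = tunit"
| "tprod (x # xs) = tmul x (tprod xs)"

definition tpow :: "tseries \<Rightarrow> nat \<Rightarrow> tseries" where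
  "tpow x k = tprod (replicate k x)"

text \<open>inverse of a series with constant term 1: sum_k (1 - x)^k\<close>
definition tinv :: "tseries \<Rightarrow> tseries" where
  "tinv x = (\<lambda>w. \<Sum>k\<le>length w. tpow (\<lambda>u. tunit u - x u) k w)"

text \<open>Shuffle product of two words, as the list (multiset) of resulting words.\<close>
fun shuf :: "word \<Rightarrow> word \<Rightarrow> word list" where
  "shuf [] w = [w]"
| "shuf v [] = [v]"
| "shuf (a # v) (b # w) = map ((#) a) (shuf v (b # w)) @ map ((#) b) (shuf (a # v) w)"

definition spair :: "tseries \<Rightarrow> word \<Rightarrow> word \<Rightarrow> real" where
  "spair x v w = sum_list (map x (shuf v w))"

definition grouplike :: "nat \<Rightarrow> tseries \<Rightarrow> bool" where
  "grouplike d x \<longleftrightarrow> tser d x \<and> x [] = 1 \<and>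
     (\<forall>v\<in>words d. \<forall>w\<in>words d. spair x v w = x v * x w)"

inductive_set lie_poly :: "nat \<Rightarrow> tseries set" for d :: nat where
  lp_gen: "1 \<le> i \<Longrightarrow> i \<le> d \<Longrightarrow> letter i \<in> lie_poly d"
| lp_zero: "tzero \<in> lie_poly d"
| lp_add: "x \<in> lie_poly d \<Longrightarrow> y \<in> lie_poly d \<Longrightarrow> (\<lambda>w. x w + y w) \<in> lie_poly d"
| lp_scale: "x \<in> lie_poly d \<Longrightarrow> (\<lambda>w. c * x w) \<in> lie_poly d"
| lp_bracket: "x \<in> lie_poly d \<Longrightarrow> y \<in> lie_poly d \<Longrightarrow>
     (\<lambda>w. tmul x y w - tmul y x w) \<in> lie_poly d"

definition hcomp :: "nat \<Rightarrow> tseries \<Rightarrow> tseries" where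
  "hcomp n x = (\<lambda>w. if length w = n then x w else 0)"

definition lie_series :: "nat \<Rightarrow> tseries \<Rightarrow> bool" where
  "lie_series d x \<longleftrightarrow> tser d x \<and> (\<forall>n. hcomp n x \<in> lie_poly d)"

definition lie_truncN :: "nat \<Rightarrow> nat \<Rightarrow> tseries set" where
  "lie_truncN d N = trunc N ` lie_poly d"

text \<open>T_v: the continuous algebra endomorphism extending e_i |-> e_i + v_i.  Since the
  v_i are Lie series (no constant term), the coefficient of u in T_v(e_w) vanishes
  for length w > length u, giving this explicit formula.\<close>
definition Tv :: "nat \<Rightarrow> (nat \<Rightarrow> tseries) \<Rightarrow> tseries \<Rightarrow> tseries" where
  "Tv d v x = (\<lambda>u. \<Sum>w\<in>{w\<in>words d. length w \<le> length u}.
       x w * tprod (map (\<lambda>i. (\<lambda>u'. letter i u' + v i u')) w) u)"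

text \<open>T_v^M = proj_M o T_v o i^M (i^M is the identity on representatives)\<close>
definition TvM :: "nat \<Rightarrow> (nat \<Rightarrow> tseries) \<Rightarrow> nat \<Rightarrow> tseries \<Rightarrow> tseries" where
  "TvM d v M y = trunc M (Tv d v y)"

definition smooth_on :: "real set \<Rightarrow> (real \<Rightarrow> real) \<Rightarrow> bool" where
  "smooth_on S g \<longleftrightarrow> (\<exists>f. f 0 = g \<and>
     (\<forall>k. \<forall>t\<in>S. (f k has_real_derivative f (Suc k) t) (at t within S)))"

definition Nsgrp :: "nat \<Rightarrow> real \<Rightarrow> nat \<Rightarrow> (real \<Rightarrow> tseries) \<Rightarrow> bool" where
  "Nsgrp d T N X \<longleftrightarrow>
     (\<forall>t\<in>{0..T}. inTN d N (X t) \<and> X t \<noteq> tzero \<and>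
        (\<forall>v\<in>words d. \<forall>w\<in>words d. length v + length w \<le> N \<longrightarrow>
            spair (X t) v w = X t v * X t w)) \<and>
     (\<forall>w. smooth_on {0..T} (\<lambda>t. X t w))"

definition sgrp :: "nat \<Rightarrow> real \<Rightarrow> (real \<Rightarrow> tseries) \<Rightarrow> bool" where
  "sgrp d T X \<longleftrightarrow>
     (\<forall>t\<in>{0..T}. tser d (X t) \<and> X t \<noteq> tzero \<and>
        (\<forall>v\<in>words d. \<forall>w\<in>words d. spair (X t) v w = X t v * X t w)) \<and>
     (\<forall>w. smooth_on {0..T} (\<lambda>t. X t w))"

definition Nsgrm :: "nat \<Rightarrow> real \<Rightarrow> nat \<Rightarrow> (real \<Rightarrow> real \<Rightarrow> tseries) \<Rightarrow> bool" where
  "Nsgrm d T N X \<longleftrightarrow>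
     (\<forall>s\<in>{0..T}. \<forall>t\<in>{0..T}. inTN d N (X s t) \<and> X s t \<noteq> tzero \<and>
        (\<forall>v\<in>words d. \<forall>w\<in>words d. length v + length w \<le> N \<longrightarrow>
            spair (X s t) v w = X s t v * X s t w)) \<and>
     (\<forall>s\<in>{0..T}. \<forall>u\<in>{0..T}. \<forall>t\<in>{0..T}. tmulN N (X s u) (X u t) = X s t) \<and>
     (\<forall>s\<in>{0..T}. \<forall>w. smooth_on {0..T} (\<lambda>t. X s t w))"

definition sgrm :: "nat \<Rightarrow> real \<Rightarrow> (real \<Rightarrow> real \<Rightarrow> tseries) \<Rightarrow> bool" where
  "sgrm d T X \<longleftrightarrow>
     (\<forall>s\<in>{0..T}. \<forall>t\<in>{0..T}. tser d (X s t) \<and> X s t \<noteq> tzero \<and>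
        (\<forall>v\<in>words d. \<forall>w\<in>words d. spair (X s t) v w = X s t v * X s t w)) \<and>
     (\<forall>s\<in>{0..T}. \<forall>u\<in>{0..T}. \<forall>t\<in>{0..T}. tmul (X s u) (X u t) = X s t) \<and>
     (\<forall>s\<in>{0..T}. \<forall>w. smooth_on {0..T} (\<lambda>t. X s t w))"

definition path_model :: "(real \<Rightarrow> tseries) \<Rightarrow> real \<Rightarrow> real \<Rightarrow> tseries" where
  "path_model X s t = tmul (tinv (X s)) (X t)"

definition path_modelN :: "nat \<Rightarrow> (real \<Rightarrow> tseries) \<Rightarrow> real \<Rightarrow> real \<Rightarrow> tseries" where
  "path_modelN N X s t = tmulN N (trunc N (tinv (X s))) (X t)"

definition ddiag :: "real \<Rightarrow> (real \<Rightarrow> real \<Rightarrow> tseries) \<Rightarrow> real \<Rightarrow> tseries" where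
  "ddiag T X s = (\<lambda>w. THE D. ((\<lambda>t. X s t w) has_real_derivative D) (at s within {0..T}))"

definition is_MinExt :: "nat \<Rightarrow> real \<Rightarrow> nat \<Rightarrow> (real \<Rightarrow> real \<Rightarrow> tseries)
    \<Rightarrow> (real \<Rightarrow> real \<Rightarrow> tseries) \<Rightarrow> bool" where
  "is_MinExt d T N Y X \<longleftrightarrow> sgrm d T X \<and>
     (\<forall>s\<in>{0..T}. \<forall>t\<in>{0..T}. \<forall>w. length w \<le> N \<longrightarrow> X s t w = Y s t w) \<and>
     (\<forall>s\<in>{0..T}. ddiag T X s \<in> lie_truncN d N)"

definition good :: "nat \<Rightarrow> real \<Rightarrow> (real \<Rightarrow> real \<Rightarrow> tseries) \<Rightarrow> bool" where
  "good d T X \<longleftrightarrow> (\<exists>N Y. Nsgrm d T N Y \<and> is_MinExt d T N Y X)"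

definition ode_sol :: "nat \<Rightarrow> real \<Rightarrow> (real \<Rightarrow> tseries) \<Rightarrow> tseries \<Rightarrow> (real \<Rightarrow> tseries) \<Rightarrow> bool" where
  "ode_sol d T A Z0 Z \<longleftrightarrow> (\<forall>t\<in>{0..T}. tser d (Z t)) \<and> Z 0 = Z0 \<and>
     (\<forall>t\<in>{0..T}. \<forall>w. ((\<lambda>s. Z s w) has_real_derivative tmul (Z t) (A t) w) (at t within {0..T}))"

definition ode_solN :: "nat \<Rightarrow> real \<Rightarrow> nat \<Rightarrow> (real \<Rightarrow> tseries) \<Rightarrow> tseries \<Rightarrow> (real \<Rightarrow> tseries) \<Rightarrow> bool" where
  "ode_solN d T M A W0 W \<longleftrightarrow> (\<forall>t\<in>{0..T}. inTN d M (W t)) \<and> W 0 = W0 \<and>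
     (\<forall>t\<in>{0..T}. \<forall>w. ((\<lambda>s. W s w) has_real_derivative tmulN M (W t) (A t) w) (at t within {0..T}))"

end

theory Submission
  imports Defs
begin

text \<open>
  \<open>T\<^sub>v\<close> substitutes \<open>e\<^sub>i + v\<^sub>i\<close> for every letter, so it is an endomorphism of the
  concatenation algebra and commutes with inversion.  When the \<open>v\<^sub>i\<close> are Lie series,
  each \<open>e\<^sub>i + v\<^sub>i\<close> is primitive for the deshuffle coproduct, so \<open>T\<^sub>v\<close> is also a
  coalgebra morphism and maps group-like elements to group-like elements.  Hence
  \<open>T\<^sub>v X\<close> is again a signature path with increments \<open>T\<^sub>v X\<^sub>s\<^sub>t\<close>, and differentiating
  \<open>X\<^sub>t = X\<^sub>s X\<^sub>s\<^sub>t\<close> at \<open>t = s\<close> shows that it solves \<open>Z' = Z T\<^sub>v (X'\<^sub>t\<^sub>t)\<close>.  That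
  equation has at most one solution: the coefficient of a word \<open>w\<close> in its right-hand
  side involves \<open>Z\<close> only on shorter words.  If the \<open>v\<^sub>i\<close> are Lie polynomials of degree
  at most \<open>K\<close>, then \<open>T\<^sub>v\<close> maps Lie polynomials of degree at most \<open>N\<close> to Lie polynomials
  of degree at most \<open>N K\<close>, so \<open>T\<^sub>v MinExt(Y)\<close> is the minimal extension of its own
  truncation, and truncating \<open>T\<^sub>v X\<^sub>0\<^sub>t\<close> at any level \<open>M\<close> solves the truncated equation.
\<close>

section \<open>Concatenation, shifts and inverses\<close>

definition tshift :: "nat \<Rightarrow> tseries \<Rightarrow> tseries" where
  "tshift a x = (\<lambda>p. x (a # p))"

lemma tmul_Nil [simp]: "tmul x y [] = x [] * y []"
  by (simp add: tmul_def)

lemma tmul_Cons: "tmul x y (a # w) = x [] * y (a # w) + tmul (tshift a x) y w"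
  unfolding tmul_def tshift_def
  by (simp add: sum.atMost_Suc_shift del: sum.atMost_Suc)

text \<open>The factor \<open>1\<close> lets the linearity rules for \<open>tmul\<close>, \<open>Tv\<close> and \<open>spair\<close> apply directly.\<close>
lemma tshift_tmul: "tshift a (tmul x y) = (\<lambda>p. x [] * tshift a y p + 1 * tmul (tshift a x) y p)"
  by (simp add: tshift_def tmul_Cons)

lemma tmul_lin_left: "tmul (\<lambda>p. a * x p + b * y p) z w = a * tmul x z w + b * tmul y z w"
  unfolding tmul_def by (simp add: algebra_simps sum.distrib sum_distrib_left)

lemma tmul_lin_right: "tmul z (\<lambda>p. a * x p + b * y p) w = a * tmul z x w + b * tmul z y w"
  unfolding tmul_def by (simp add: algebra_simps sum.distrib sum_distrib_left)

lemma tmul_sum_left: "tmul (\<lambda>p. \<Sum>i\<in>I. f i p) z w = (\<Sum>i\<in>I. tmul (f i) z w)"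
  unfolding tmul_def by (simp add: sum_distrib_right sum.swap[of _ I])

lemma tmul_sum_right: "tmul z (\<lambda>p. \<Sum>i\<in>I. f i p) w = (\<Sum>i\<in>I. tmul z (f i) w)"
  unfolding tmul_def by (simp add: sum_distrib_left sum.swap[of _ I])

lemma tmul_diff_left: "tmul (\<lambda>p. x p - y p) z w = tmul x z w - tmul y z w"
  unfolding tmul_def by (simp add: algebra_simps sum_subtractf)

lemma tmul_assoc: "tmul (tmul x y) z = tmul x (tmul y z)"
proof
  show "tmul (tmul x y) z w = tmul x (tmul y z) w" for w
  proof (induction w arbitrary: x)
    case Nil
    show ?case by simp
  next
    case (Cons a w)
    have "tmul (tshift a (tmul x y)) z w = x [] * tmul (tshift a y) z w + tmul (tmul (tshift a x) y) z w"
      unfolding tshift_tmul tmul_lin_left by simp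
    then show ?case
      by (simp add: tmul_Cons Cons.IH algebra_simps)
  qed
qed

lemma tmul_zero_left [simp]: "tmul (\<lambda>p. 0) z w = 0"
  by (simp add: tmul_def)

lemma tmul_unit_left [simp]: "tmul tunit x = x"
proof
  show "tmul tunit x w = x w" for w
    by (cases w) (auto simp: tmul_Cons tunit_def tshift_def)
qed

lemma tmul_unit_right [simp]: "tmul x tunit = x"
proof
  show "tmul x tunit w = x w" for w
    by (induction w arbitrary: x) (simp_all add: tmul_Cons tunit_def tshift_def)
qed

lemma tunit_Nil [simp]: "tunit [] = 1"
  by (simp add: tunit_def)

lemma tmul_cong:
  assumes "\<And>p. length p \<le> length w \<Longrightarrow> x p = x' p"
      and "\<And>p. length p \<le> length w \<Longrightarrow> y p = y' p"
  shows "tmul x y w = tmul x' y' w"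
  unfolding tmul_def using assms by (intro sum.cong) auto

lemma tmul_cong_strict:
  assumes "q [] = 0" and "\<And>p. length p < length w \<Longrightarrow> y p = y' p"
  shows "tmul q y w = tmul q y' w"
  unfolding tmul_def
proof (intro sum.cong refl)
  fix i assume "i \<in> {..length w}"
  then show "q (take i w) * y (drop i w) = q (take i w) * y' (drop i w)"
    using assms by (cases "i = 0") auto
qed

lemma tmul_vanish_beyond:
  assumes "\<And>w. n < length w \<Longrightarrow> x w = 0" "\<And>w. m < length w \<Longrightarrow> y w = 0" "n + m < length w"
  shows "tmul x y w = 0"
  unfolding tmul_def
proof (intro sum.neutral ballI)
  fix i assume "i \<in> {..length w}"
  then have "n < length (take i w) \<or> m < length (drop i w)" using assms(3) by auto
  then show "x (take i w) * y (drop i w) = 0" using assms(1,2) by auto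
qed

lemma words_Cons [simp]: "a # w \<in> words d \<longleftrightarrow> a \<in> {1..d} \<and> w \<in> words d"
  by (auto simp: words_def)

lemma words_Nil [simp]: "[] \<in> words d"
  by (auto simp: words_def)

lemma words_append [simp]: "u @ w \<in> words d \<longleftrightarrow> u \<in> words d \<and> w \<in> words d"
  by (auto simp: words_def)

lemma tser_tmul: "tser d x \<Longrightarrow> tser d y \<Longrightarrow> tser d (tmul x y)"
  unfolding tser_def tmul_def
proof (intro allI impI sum.neutral ballI)
  fix w i assume x: "\<forall>w. w \<notin> words d \<longrightarrow> x w = 0" and y: "\<forall>w. w \<notin> words d \<longrightarrow> y w = 0"
    and w: "w \<notin> words d"
  have "take i w \<notin> words d \<or> drop i w \<notin> words d"
    using w words_append[of "take i w" "drop i w" d] by simp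
  then show "x (take i w) * y (drop i w) = 0" using x y by auto
qed

lemma tser_tunit [simp]: "tser d tunit"
  by (simp add: tser_def tunit_def)

lemma tser_letter: "i \<in> {1..d} \<Longrightarrow> tser d (letter i)"
  by (auto simp: tser_def letter_def)

lemma tpow_0 [simp]: "tpow a 0 = tunit"
  by (simp add: tpow_def)

lemma tpow_Suc: "tpow a (Suc k) = tmul a (tpow a k)"
  by (simp add: tpow_def)

lemma tpow_vanish:
  assumes "a [] = 0" "length w < k"
  shows "tpow a k w = 0"
  using assms(2)
proof (induction k arbitrary: w)
  case (Suc k)
  show ?case
    unfolding tpow_Suc tmul_def
  proof (intro sum.neutral ballI)
    fix i assume "i \<in> {..length w}"
    with Suc show "a (take i w) * tpow a k (drop i w) = 0"
      using assms(1) by (cases "i = 0") auto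
  qed
qed simp

lemma tpow_cong:
  assumes "\<And>p. length p \<le> length w \<Longrightarrow> a p = b p"
  shows "tpow a k w = tpow b k w"
proof -
  have "tpow a k u = tpow b k u" if "length u \<le> length w" for u
    using that by (induction k arbitrary: u) (auto simp: tpow_Suc intro!: tmul_cong assms)
  then show ?thesis by simp
qed

definition tinv_partial :: "tseries \<Rightarrow> nat \<Rightarrow> tseries" where
  "tinv_partial x n = (\<lambda>w. \<Sum>k\<le>n. tpow (\<lambda>u. tunit u - x u) k w)"

lemma tinv_eq_partial:
  assumes "x [] = 1" "length w \<le> n"
  shows "tinv x w = tinv_partial x n w"
proof -
  have "tinv_partial x n w = (\<Sum>k\<le>length w. tpow (\<lambda>u. tunit u - x u) k w)"
    unfolding tinv_partial_def
    by (rule sum.mono_neutral_right) (use assms in \<open>auto intro!: tpow_vanish simp: tunit_def\<close>)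
  then show ?thesis by (simp add: tinv_def)
qed

lemma tinv_right:
  assumes "x [] = 1"
  shows "tmul x (tinv x) = tunit"
proof
  fix w :: word
  define a where "a = (\<lambda>u. tunit u - x u)"
  define n where "n = length w"
  have "tmul x (tinv x) w = tmul x (tinv_partial x n) w"
    by (rule tmul_cong) (use assms in \<open>auto simp: n_def intro: tinv_eq_partial\<close>)
  also have "\<dots> = tinv_partial x n w - tmul a (tinv_partial x n) w"
    using tmul_diff_left[of tunit a "tinv_partial x n" w] unfolding a_def by simp
  also have "\<dots> = (\<Sum>k\<le>n. tpow a k w) - (\<Sum>k\<le>n. tpow a (Suc k) w)"
    unfolding tinv_partial_def a_def[symmetric] tmul_sum_right tpow_Suc ..
  also have "\<dots> = tpow a 0 w - tpow a (Suc n) w"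
    by (induction n) auto
  also have "tpow a (Suc n) w = 0"
    using assms by (intro tpow_vanish) (auto simp: n_def a_def)
  finally show "tmul x (tinv x) w = tunit w" by simp
qed

lemma tinv_Nil: "x [] = 1 \<Longrightarrow> tinv x [] = 1"
  by (simp add: tinv_def tunit_def)

lemma tinv_left:
  assumes "x [] = 1"
  shows "tmul (tinv x) x = tunit"
proof -
  have y: "tmul (tinv x) (tinv (tinv x)) = tunit"
    using tinv_right[of "tinv x"] tinv_Nil[of x] assms by blast
  have "x = tmul (tmul x (tinv x)) (tinv (tinv x))"
    using y by (simp add: tmul_assoc)
  then have "x = tinv (tinv x)"
    using tinv_right[of x, OF assms] by simp
  then show ?thesis using y by simp
qed

lemma tinv_unique:
  assumes "x [] = 1" "tmul y x = tunit"
  shows "y = tinv x"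
proof -
  have "y = tmul (tmul y x) (tinv x)"
    using tinv_right[of x, OF assms(1)] by (simp add: tmul_assoc)
  then show ?thesis using assms(2) by simp
qed

lemma tinv_cong:
  assumes "\<And>p. length p \<le> length w \<Longrightarrow> x p = y p"
  shows "tinv x w = tinv y w"
  unfolding tinv_def by (intro sum.cong refl tpow_cong) (use assms in auto)

lemma trunc_tunit [simp]: "trunc M tunit = tunit"
  by (auto simp: trunc_def tunit_def)

lemma trunc_tinv: "trunc M (tinv (trunc M x)) = trunc M (tinv x)"
  unfolding trunc_def by (rule ext) (auto intro!: tinv_cong)

lemma trunc_tmul: "trunc M (tmul (trunc M x) (trunc M y)) = trunc M (tmul x y)"
  unfolding trunc_def[of M "tmul _ _"] by (rule ext) (auto intro!: tmul_cong simp: trunc_def)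

lemma trunc_tmul_left: "trunc M (tmul (trunc M x) y) = trunc M (tmul x y)"
  unfolding trunc_def[of M "tmul _ _"] by (rule ext) (auto intro!: tmul_cong simp: trunc_def)

section \<open>The substitution endomorphism \<open>T\<^sub>v\<close>\<close>

definition admissible_subst :: "nat \<Rightarrow> (nat \<Rightarrow> tseries) \<Rightarrow> bool" where
  "admissible_subst d v \<longleftrightarrow> (\<forall>i\<in>{1..d}. tser d (v i) \<and> v i [] = 0)"

definition subst_letter :: "(nat \<Rightarrow> tseries) \<Rightarrow> nat \<Rightarrow> tseries" where
  "subst_letter v i = (\<lambda>u. letter i u + v i u)"

definition subst_word :: "(nat \<Rightarrow> tseries) \<Rightarrow> word \<Rightarrow> tseries" where
  "subst_word v a = tprod (map (subst_letter v) a)"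

definition words_le :: "nat \<Rightarrow> nat \<Rightarrow> word set" where
  "words_le d n = {w \<in> words d. length w \<le> n}"

lemma Tv_words_le: "Tv d v x u = (\<Sum>a\<in>words_le d (length u). x a * subst_word v a u)"
  by (simp add: Tv_def words_le_def subst_word_def subst_letter_def[abs_def])

lemma finite_words_le [simp]: "finite (words_le d n)"
proof -
  have "words_le d n = {xs. set xs \<subseteq> {1..d} \<and> length xs \<le> n}"
    by (auto simp: words_le_def words_def)
  then show ?thesis using finite_lists_length_le[of "{1..d}" n] by simp
qed

lemma words_le_0: "words_le d 0 = {[]}"
  by (auto simp: words_le_def)

lemma words_le_Suc: "words_le d (Suc n) = insert [] (\<Union>i\<in>{1..d}. (#) i ` words_le d n)"
proof (intro set_eqI iffI)
  fix w assume "w \<in> words_le d (Suc n)"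
  then show "w \<in> insert [] (\<Union>i\<in>{1..d}. (#) i ` words_le d n)"
    by (cases w) (auto simp: words_le_def)
qed (auto simp: words_le_def)

lemma sum_words_le_Suc:
  "(\<Sum>a\<in>words_le d (Suc n). f a) = f [] + (\<Sum>i\<in>{1..d}. \<Sum>a\<in>words_le d n. f (i # a))"
proof -
  have "(\<Sum>a\<in>words_le d (Suc n). f a) = f [] + (\<Sum>a\<in>(\<Union>i\<in>{1..d}. (#) i ` words_le d n). f a)"
    unfolding words_le_Suc by (subst sum.insert) auto
  also have "(\<Sum>a\<in>(\<Union>i\<in>{1..d}. (#) i ` words_le d n). f a)
      = (\<Sum>i\<in>{1..d}. \<Sum>a\<in>(#) i ` words_le d n. f a)"
    by (rule sum.UNION_disjoint) auto
  also have "\<dots> = (\<Sum>i\<in>{1..d}. \<Sum>a\<in>words_le d n. f (i # a))"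
    by (simp add: sum.reindex)
  finally show ?thesis .
qed

lemma subst_word_Nil [simp]: "subst_word v [] = tunit"
  by (simp add: subst_word_def)

lemma subst_word_Cons: "subst_word v (i # a) = tmul (subst_letter v i) (subst_word v a)"
  by (simp add: subst_word_def)

lemma subst_letter_Nil: "admissible_subst d v \<Longrightarrow> i \<in> {1..d} \<Longrightarrow> subst_letter v i [] = 0"
  by (simp add: admissible_subst_def subst_letter_def letter_def)

lemma tser_subst_word: "admissible_subst d v \<Longrightarrow> a \<in> words d \<Longrightarrow> tser d (subst_word v a)"
proof (induction a)
  case (Cons i a)
  then have "tser d (subst_letter v i)"
    using tser_letter[of i d] by (auto simp: admissible_subst_def subst_letter_def tser_def)
  with Cons show ?case by (auto simp: subst_word_Cons intro: tser_tmul)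
qed simp

lemma subst_word_vanish:
  assumes "admissible_subst d v" "a \<in> words d" "length u < length a"
  shows "subst_word v a u = 0"
  using assms(2,3)
proof (induction a arbitrary: u)
  case (Cons i a)
  show ?case
    unfolding subst_word_Cons tmul_def
  proof (intro sum.neutral ballI)
    fix j assume "j \<in> {..length u}"
    with Cons show "subst_letter v i (take j u) * subst_word v a (drop j u) = 0"
      using subst_letter_Nil[OF assms(1)] by (cases "j = 0") auto
  qed
qed simp

lemma Tv_eq_words_le:
  assumes "admissible_subst d v" "length u \<le> n"
  shows "Tv d v x u = (\<Sum>a\<in>words_le d n. x a * subst_word v a u)"
  unfolding Tv_words_le
  by (rule sum.mono_neutral_left[OF finite_words_le])
     (use assms in \<open>auto simp: words_le_def intro!: subst_word_vanish\<close>)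

lemma Tv_Nil [simp]: "Tv d v x [] = x []"
  by (simp add: Tv_words_le words_le_0)

lemma Tv_lin: "Tv d v (\<lambda>p. a * x p + b * y p) u = a * Tv d v x u + b * Tv d v y u"
  unfolding Tv_words_le by (simp add: algebra_simps sum.distrib sum_distrib_left)

lemma Tv_diff: "Tv d v (\<lambda>p. x p - y p) u = Tv d v x u - Tv d v y u"
  unfolding Tv_words_le by (simp add: algebra_simps sum_subtractf)

lemma Tv_scale: "Tv d v (\<lambda>p. a * x p) u = a * Tv d v x u"
  unfolding Tv_words_le by (simp add: sum_distrib_left algebra_simps)

lemma Tv_tunit [simp]: "Tv d v tunit = tunit"
proof
  fix u
  have "Tv d v tunit u = (\<Sum>a\<in>words_le d (length u). if a = [] then subst_word v a u else 0)"
    unfolding Tv_words_le by (intro sum.cong) (auto simp: tunit_def)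
  also have "\<dots> = tunit u"
    by (subst sum.delta[OF finite_words_le]) (auto simp: words_le_def)
  finally show "Tv d v tunit u = tunit u" .
qed

lemma tser_Tv: "admissible_subst d v \<Longrightarrow> tser d (Tv d v x)"
  unfolding Tv_words_le tser_def using tser_subst_word
  by (auto simp: words_le_def tser_def intro!: sum.neutral)

lemma Tv_letter:
  assumes "admissible_subst d v" "i \<in> {1..d}"
  shows "Tv d v (letter i) = subst_letter v i"
proof
  fix u :: word
  show "Tv d v (letter i) u = subst_letter v i u"
  proof (cases u)
    case Nil
    then show ?thesis using subst_letter_Nil[OF assms] by (simp add: letter_def)
  next
    case (Cons c u')
    have "Tv d v (letter i) u = (\<Sum>a\<in>words_le d (length u). if a = [i] then subst_word v a u else 0)"
      unfolding Tv_words_le by (intro sum.cong refl) (auto simp: letter_def)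
    also have "\<dots> = subst_word v [i] u"
      using assms Cons by (subst sum.delta[OF finite_words_le]) (auto simp: words_le_def)
    finally show ?thesis by (simp add: subst_word_Cons)
  qed
qed

lemma Tv_rec:
  assumes "admissible_subst d v"
  shows "Tv d v x u = x [] * tunit u + (\<Sum>i\<in>{1..d}. tmul (subst_letter v i) (Tv d v (tshift i x)) u)"
proof -
  have "Tv d v x u = (\<Sum>a\<in>words_le d (Suc (length u)). x a * subst_word v a u)"
    by (rule Tv_eq_words_le[OF assms]) simp
  also have "\<dots> = x [] * tunit u + (\<Sum>i\<in>{1..d}. \<Sum>a\<in>words_le d (length u).
      x (i # a) * tmul (subst_letter v i) (subst_word v a) u)"
    by (simp add: sum_words_le_Suc subst_word_Cons)
  also have "(\<Sum>i\<in>{1..d}. \<Sum>a\<in>words_le d (length u).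
      x (i # a) * tmul (subst_letter v i) (subst_word v a) u)
      = (\<Sum>i\<in>{1..d}. tmul (subst_letter v i) (Tv d v (tshift i x)) u)"
  proof (rule sum.cong[OF refl])
    fix i
    have "(\<Sum>a\<in>words_le d (length u). x (i # a) * tmul (subst_letter v i) (subst_word v a) u)
        = tmul (subst_letter v i) (\<lambda>p. \<Sum>a\<in>words_le d (length u). x (i # a) * subst_word v a p) u"
      unfolding tmul_sum_right using tmul_lin_right[of "subst_letter v i" _ _ 0 "\<lambda>p. 0"] by simp
    also have "\<dots> = tmul (subst_letter v i) (Tv d v (tshift i x)) u"
      by (rule tmul_cong) (auto simp: Tv_eq_words_le[OF assms] tshift_def)
    finally show "(\<Sum>a\<in>words_le d (length u). x (i # a) * tmul (subst_letter v i) (subst_word v a) u)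
        = tmul (subst_letter v i) (Tv d v (tshift i x)) u" .
  qed
  finally show ?thesis by simp
qed

text \<open>Induction on the word length: by \<open>Tv_rec\<close>, \<open>T\<^sub>v x = x\<^sub>\<emptyset> + \<Sum>\<^sub>i q\<^sub>i \<otimes> T\<^sub>v (\<partial>\<^sub>i x)\<close>
  with \<open>q\<^sub>i = e\<^sub>i + v\<^sub>i\<close> and \<open>\<partial>\<^sub>i = tshift i\<close>, while \<open>\<partial>\<^sub>i (x y) = x\<^sub>\<emptyset> \<partial>\<^sub>i y + (\<partial>\<^sub>i x) y\<close>;
  since \<open>q\<^sub>i\<close> has no constant term, only shorter words of \<open>T\<^sub>v (\<partial>\<^sub>i (x y))\<close> enter.\<close>
lemma Tv_tmul:
  assumes "admissible_subst d v"
  shows "Tv d v (tmul x y) = tmul (Tv d v x) (Tv d v y)"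
proof
  fix u
  show "Tv d v (tmul x y) u = tmul (Tv d v x) (Tv d v y) u"
  proof (induction "length u" arbitrary: u x rule: less_induct)
    case less
    define q where "q i = subst_letter v i" for i
    have step: "tmul (q i) (Tv d v (tshift i (tmul x y))) u
        = x [] * tmul (q i) (Tv d v (tshift i y)) u + tmul (tmul (q i) (Tv d v (tshift i x))) (Tv d v y) u"
      if i: "i \<in> {1..d}" for i
    proof -
      have "tmul (q i) (Tv d v (tshift i (tmul x y))) u
          = tmul (q i) (\<lambda>p. x [] * Tv d v (tshift i y) p + 1 * tmul (Tv d v (tshift i x)) (Tv d v y) p) u"
      proof (rule tmul_cong_strict)
        show "q i [] = 0" using subst_letter_Nil[OF assms i] by (simp add: q_def)
        fix p :: word assume "length p < length u"
        then show "Tv d v (tshift i (tmul x y)) p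
            = x [] * Tv d v (tshift i y) p + 1 * tmul (Tv d v (tshift i x)) (Tv d v y) p"
          unfolding tshift_tmul Tv_lin using less by simp
      qed
      then show ?thesis unfolding tmul_lin_right by (simp add: tmul_assoc)
    qed
    have Tx: "(\<lambda>p. \<Sum>i\<in>{1..d}. tmul (q i) (Tv d v (tshift i x)) p) = (\<lambda>p. 1 * Tv d v x p + (- x []) * tunit p)"
      by (rule ext) (simp add: Tv_rec[OF assms, of x] q_def)
    have "Tv d v (tmul x y) u = x [] * (y [] * tunit u + (\<Sum>i\<in>{1..d}. tmul (q i) (Tv d v (tshift i y)) u))
        + tmul (\<lambda>p. \<Sum>i\<in>{1..d}. tmul (q i) (Tv d v (tshift i x)) p) (Tv d v y) u"
      by (simp add: Tv_rec[OF assms, of "tmul x y"] q_def[symmetric] step sum.distrib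
          sum_distrib_left tmul_sum_left algebra_simps)
    also have "\<dots> = x [] * Tv d v y u + (tmul (Tv d v x) (Tv d v y) u - x [] * Tv d v y u)"
      unfolding Tx tmul_lin_left by (simp add: Tv_rec[OF assms, of y] q_def)
    finally show ?case by simp
  qed
qed

lemma Tv_tinv:
  assumes "admissible_subst d v" "x [] = 1"
  shows "Tv d v (tinv x) = tinv (Tv d v x)"
proof (rule tinv_unique)
  show "Tv d v x [] = 1" using assms by simp
  show "tmul (Tv d v (tinv x)) (Tv d v x) = tunit"
    using tinv_left[of x] assms by (simp add: Tv_tmul[OF assms(1), symmetric])
qed

lemma trunc_Tv_trunc: "trunc M (Tv d v (trunc M x)) = trunc M (Tv d v x)"
  unfolding trunc_def[of M "Tv d v _"] Tv_words_le
  by (rule ext) (auto intro!: sum.cong simp: trunc_def words_le_def)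

section \<open>Shuffles, primitive elements and the coalgebra structure\<close>

definition on_cons :: "(nat \<Rightarrow> word \<Rightarrow> real) \<Rightarrow> word \<Rightarrow> real" where
  "on_cons F l = (case l of [] \<Rightarrow> 0 | a # t \<Rightarrow> F a t)"

lemma on_cons_Nil [simp]: "on_cons F [] = 0"
  and on_cons_Cons [simp]: "on_cons F (a # t) = F a t"
  by (simp_all add: on_cons_def)

lemma shuf_Nil_right [simp]: "shuf v [] = [v]"
  by (cases v) auto

lemma spair_Nil_left [simp]: "spair x [] w = x w"
  by (simp add: spair_def)

lemma spair_Nil_right [simp]: "spair x u [] = x u"
  by (simp add: spair_def)

lemma spair_rec:
  "spair x u w = (if u = [] \<and> w = [] then x [] else 0)
     + on_cons (\<lambda>a t. spair (tshift a x) t w) u + on_cons (\<lambda>b t. spair (tshift b x) u t) w"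
  by (cases u; cases w) (auto simp: spair_def tshift_def o_def)

lemma spair_lin: "spair (\<lambda>p. a * x p + b * y p) u w = a * spair x u w + b * spair y u w"
  by (simp add: spair_def sum_list_addf sum_list_const_mult)

lemma spair_diff: "spair (\<lambda>p. x p - y p) u w = spair x u w - spair y u w"
  by (simp add: spair_def sum_list_subtractf)

lemma spair_sum: "spair (\<lambda>p. \<Sum>i\<in>I. f i p) u w = (\<Sum>i\<in>I. spair (f i) u w)"
proof -
  have "(\<Sum>p\<leftarrow>L. \<Sum>i\<in>I. f i p) = (\<Sum>i\<in>I. \<Sum>p\<leftarrow>L. f i p)" for L
    by (induction L) (simp_all add: sum.distrib)
  then show ?thesis by (simp add: spair_def)
qed

lemma spair_zero [simp]: "spair (\<lambda>p. 0) u w = 0"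
  by (simp add: spair_def)

lemma spair_tunit: "spair tunit u w = tunit u * tunit w"
  using spair_rec[of tunit u w] by (cases u; cases w) (auto simp: tshift_def tunit_def)

lemma length_shuf: "z \<in> set (shuf u w) \<Longrightarrow> length z = length u + length w"
  by (induction u w arbitrary: z rule: shuf.induct) auto

lemma spair_cong:
  assumes "\<And>z. length z = length u + length w \<Longrightarrow> x z = y z"
  shows "spair x u w = spair y u w"
  unfolding spair_def using assms length_shuf[of _ u w]
  by (intro arg_cong[where f=sum_list] map_cong) auto

lemma spair_trunc: "length u + length w \<le> M \<Longrightarrow> spair (trunc M x) u w = spair x u w"
  by (rule spair_cong) (simp add: trunc_def)

lemma spair_hcomp: "spair (hcomp (length u + length w) x) u w = spair x u w"
  by (rule spair_cong) (simp add: hcomp_def)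

definition shuffle_conv :: "tseries \<Rightarrow> tseries \<Rightarrow> word \<Rightarrow> word \<Rightarrow> real" where
  "shuffle_conv x y u w = (\<Sum>i\<le>length u. \<Sum>j\<le>length w.
      spair x (take i u) (take j w) * spair y (drop i u) (drop j w))"

lemma shuffle_conv_rec:
  "shuffle_conv x y u w = x [] * spair y u w
     + on_cons (\<lambda>a t. shuffle_conv (tshift a x) y t w) u
     + on_cons (\<lambda>b t. shuffle_conv (tshift b x) y u t) w"
proof -
  have empty: "(\<Sum>i\<le>length u. \<Sum>j\<le>length w. (if take i u = [] \<and> take j w = [] then x [] else 0)
      * spair y (drop i u) (drop j w)) = x [] * spair y u w"
    by (cases u; cases w) (simp_all add: sum.atMost_Suc_shift del: sum.atMost_Suc)
  have left: "(\<Sum>i\<le>length u. \<Sum>j\<le>length w. on_cons (\<lambda>a t. spair (tshift a x) t (take j w)) (take i u)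
      * spair y (drop i u) (drop j w)) = on_cons (\<lambda>a t. shuffle_conv (tshift a x) y t w) u"
    by (cases u) (simp_all add: shuffle_conv_def sum.atMost_Suc_shift del: sum.atMost_Suc)
  have right: "(\<Sum>i\<le>length u. \<Sum>j\<le>length w. on_cons (\<lambda>b t. spair (tshift b x) (take i u) t) (take j w)
      * spair y (drop i u) (drop j w)) = on_cons (\<lambda>b t. shuffle_conv (tshift b x) y u t) w"
    by (cases w) (simp_all add: shuffle_conv_def sum.atMost_Suc_shift del: sum.atMost_Suc)
  show ?thesis
    unfolding shuffle_conv_def[of x y u w] empty[symmetric] left[symmetric] right[symmetric]
    by (subst spair_rec) (simp add: distrib_right sum.distrib)
qed

lemma spair_tmul_rec:
  "spair (tmul x y) u w = x [] * spair y u w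
     + on_cons (\<lambda>a t. spair (tmul (tshift a x) y) t w) u
     + on_cons (\<lambda>b t. spair (tmul (tshift b x) y) u t) w"
proof -
  have "spair (tmul x y) u w = (if u = [] \<and> w = [] then x [] * y [] else 0)
      + on_cons (\<lambda>a t. x [] * spair (tshift a y) t w + spair (tmul (tshift a x) y) t w) u
      + on_cons (\<lambda>b t. x [] * spair (tshift b y) u t + spair (tmul (tshift b x) y) u t) w"
    by (subst spair_rec) (cases w; simp add: tshift_tmul spair_lin[of "x []" _ 1, simplified])
  also have "\<dots> = x [] * spair y u w
     + on_cons (\<lambda>a t. spair (tmul (tshift a x) y) t w) u
     + on_cons (\<lambda>b t. spair (tmul (tshift b x) y) u t) w"
    by (subst (2) spair_rec) (cases u; cases w; simp add: algebra_simps)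
  finally show ?thesis .
qed

text \<open>The deshuffle coproduct is multiplicative: \<open>\<Delta> (x y) = \<Delta> x \<Delta> y\<close>.\<close>
lemma spair_tmul: "spair (tmul x y) u w = shuffle_conv x y u w"
proof (induction "length u + length w" arbitrary: u w x rule: less_induct)
  case less
  have "on_cons (\<lambda>a t. spair (tmul (tshift a x) y) t w) u = on_cons (\<lambda>a t. shuffle_conv (tshift a x) y t w) u"
    by (cases u) (auto intro!: less)
  moreover have "on_cons (\<lambda>b t. spair (tmul (tshift b x) y) u t) w = on_cons (\<lambda>b t. shuffle_conv (tshift b x) y u t) w"
    by (cases w) (auto intro!: less)
  ultimately show ?case
    by (simp add: spair_tmul_rec[of x y u w] shuffle_conv_rec[of x y u w])
qed

definition primitive :: "tseries \<Rightarrow> bool" where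
  "primitive x \<longleftrightarrow> x [] = 0 \<and> (\<forall>u w. u \<noteq> [] \<longrightarrow> w \<noteq> [] \<longrightarrow> spair x u w = 0)"

lemma primitive_spair:
  "primitive q \<Longrightarrow> spair q a b = (if b = [] then q a else 0) + (if a = [] then q b else 0)"
  unfolding primitive_def by (cases "a = []"; cases "b = []") auto

lemma primitive_lin: "primitive x \<Longrightarrow> primitive y \<Longrightarrow> primitive (\<lambda>p. a * x p + b * y p)"
  unfolding primitive_def by (simp add: spair_lin)

lemma primitive_letter: "primitive (letter i)"
  unfolding primitive_def
proof (intro conjI allI impI)
  show "letter i [] = 0" by (simp add: letter_def)
  fix u w :: word assume "u \<noteq> []" "w \<noteq> []"
  then have "spair (letter i) u w = spair (\<lambda>p. 0) u w"
    by (intro spair_cong) (cases u; cases w; auto simp: letter_def)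
  then show "spair (letter i) u w = 0" by simp
qed

lemma spair_tmul_primitive:
  assumes "primitive q"
  shows "spair (tmul q y) u w = (\<Sum>i\<le>length u. q (take i u) * spair y (drop i u) w)
                              + (\<Sum>j\<le>length w. q (take j w) * spair y u (drop j w))"
proof -
  have "spair (tmul q y) u w = (\<Sum>i\<le>length u. \<Sum>j\<le>length w.
      (if j = 0 then q (take i u) * spair y (drop i u) (drop j w) else 0)
      + (if i = 0 then q (take j w) * spair y (drop i u) (drop j w) else 0))"
    unfolding spair_tmul shuffle_conv_def primitive_spair[OF assms]
    by (intro sum.cong refl) (auto simp: algebra_simps)
  also have "\<dots> = (\<Sum>i\<le>length u. \<Sum>j\<le>length w.
        if j = 0 then q (take i u) * spair y (drop i u) (drop j w) else 0)
      + (\<Sum>i\<le>length u. \<Sum>j\<le>length w.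
        if i = 0 then q (take j w) * spair y (drop i u) (drop j w) else 0)"
    by (simp only: sum.distrib)
  also have "(\<Sum>i\<le>length u. \<Sum>j\<le>length w.
        if i = 0 then q (take j w) * spair y (drop i u) (drop j w) else 0)
      = (\<Sum>j\<le>length w. q (take j w) * spair y u (drop j w))"
    by (subst sum.swap) simp
  finally show ?thesis by simp
qed

lemma spair_tmul_primitive_nonempty:
  assumes "primitive x" "primitive y" "u \<noteq> []" "w \<noteq> []"
  shows "spair (tmul x y) u w = x u * y w + x w * y u"
  unfolding spair_tmul_primitive[OF assms(1)] primitive_spair[OF assms(2)] using assms(3,4)
  by (simp add: if_distrib[of "(*) (x _)"] cong: if_cong)

lemma primitive_bracket:
  assumes "primitive x" "primitive y"
  shows "primitive (\<lambda>w. tmul x y w - tmul y x w)"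
  unfolding primitive_def
proof (intro conjI allI impI)
  show "tmul x y [] - tmul y x [] = 0" by simp
  fix u w :: word assume "u \<noteq> []" "w \<noteq> []"
  then show "spair (\<lambda>w. tmul x y w - tmul y x w) u w = 0"
    using assms by (simp add: spair_diff spair_tmul_primitive_nonempty)
qed

lemma lie_poly_primitive: "x \<in> lie_poly d \<Longrightarrow> primitive x"
proof (induction rule: lie_poly.induct)
  case lp_zero
  show ?case by (simp add: tzero_def primitive_def)
next
  case (lp_add x y)
  then show ?case using primitive_lin[of x y 1 1] by simp
next
  case (lp_scale x c)
  then show ?case using primitive_lin[of x x c 0] by simp
qed (simp_all add: primitive_letter primitive_bracket)

lemma lie_series_primitive:
  assumes "lie_series d x"
  shows "primitive x"
  unfolding primitive_def
proof (intro conjI allI impI)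
  have hc: "primitive (hcomp n x)" for n
    using assms lie_poly_primitive unfolding lie_series_def by blast
  show "x [] = 0"
    using hc[of 0] by (simp add: primitive_def hcomp_def)
  fix u w :: word assume "u \<noteq> []" "w \<noteq> []"
  then show "spair x u w = 0"
    using hc[of "length u + length w"] spair_hcomp[of u w x] by (simp add: primitive_def)
qed

definition primitive_subst :: "nat \<Rightarrow> (nat \<Rightarrow> tseries) \<Rightarrow> bool" where
  "primitive_subst d v \<longleftrightarrow> (\<forall>i\<in>{1..d}. tser d (v i) \<and> primitive (v i))"

lemma primitive_subst_admissible: "primitive_subst d v \<Longrightarrow> admissible_subst d v"
  by (simp add: primitive_subst_def admissible_subst_def primitive_def)

lemma primitive_subst_letter: "primitive_subst d v \<Longrightarrow> i \<in> {1..d} \<Longrightarrow> primitive (subst_letter v i)"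
  unfolding primitive_subst_def subst_letter_def
  using primitive_lin[OF primitive_letter[of i], of "v i" 1 1] by simp

lemma lie_series_primitive_subst: "\<forall>i\<in>{1..d}. lie_series d (v i) \<Longrightarrow> primitive_subst d v"
  unfolding primitive_subst_def using lie_series_primitive lie_series_def by blast

text \<open>\<open>(T\<^sub>v \<otimes> T\<^sub>v) (\<Delta> x)\<close> at \<open>u \<otimes> w\<close>, for the deshuffle coproduct \<open>\<Delta>\<close>,
  summing over words of length at most \<open>n\<close> and \<open>m\<close>.\<close>
definition Tv_coprod :: "nat \<Rightarrow> (nat \<Rightarrow> tseries) \<Rightarrow> tseries \<Rightarrow> nat \<Rightarrow> nat \<Rightarrow> word \<Rightarrow> word \<Rightarrow> real" where
  "Tv_coprod d v x n m u w =
     (\<Sum>a\<in>words_le d n. \<Sum>b\<in>words_le d m. spair x a b * subst_word v a u * subst_word v b w)"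

lemma spair_Tv_rec:
  assumes "primitive_subst d v"
  shows "spair (Tv d v x) u w = x [] * tunit u * tunit w
    + (\<Sum>i\<in>{1..d}. \<Sum>k\<le>length u. subst_letter v i (take k u) * spair (Tv d v (tshift i x)) (drop k u) w)
    + (\<Sum>i\<in>{1..d}. \<Sum>k\<le>length w. subst_letter v i (take k w) * spair (Tv d v (tshift i x)) u (drop k w))"
proof -
  have "Tv d v x = (\<lambda>p. x [] * tunit p + 1 * (\<Sum>i\<in>{1..d}. tmul (subst_letter v i) (Tv d v (tshift i x)) p))"
    by (rule ext) (simp add: Tv_rec[OF primitive_subst_admissible[OF assms]])
  then have "spair (Tv d v x) u w = x [] * spair tunit u w
      + (\<Sum>i\<in>{1..d}. spair (tmul (subst_letter v i) (Tv d v (tshift i x))) u w)"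
    by (simp only: spair_lin spair_sum)
  also have "\<dots> = x [] * tunit u * tunit w
    + (\<Sum>i\<in>{1..d}. (\<Sum>k\<le>length u. subst_letter v i (take k u) * spair (Tv d v (tshift i x)) (drop k u) w)
      + (\<Sum>k\<le>length w. subst_letter v i (take k w) * spair (Tv d v (tshift i x)) u (drop k w)))"
    by (simp add: spair_tunit spair_tmul_primitive primitive_subst_letter[OF assms])
  finally show ?thesis by (simp add: sum.distrib)
qed

lemma Tv_coprod_Suc:
  "Tv_coprod d v x (Suc n) (Suc m) u w = x [] * tunit u * tunit w
    + (\<Sum>i\<in>{1..d}. \<Sum>a\<in>words_le d n. \<Sum>b\<in>words_le d (Suc m).
         spair (tshift i x) a b * subst_word v (i # a) u * subst_word v b w)
    + (\<Sum>i\<in>{1..d}. \<Sum>a\<in>words_le d (Suc n). \<Sum>b\<in>words_le d m.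
         spair (tshift i x) a b * subst_word v a u * subst_word v (i # b) w)"
proof -
  have "Tv_coprod d v x (Suc n) (Suc m) u w
      = (\<Sum>a\<in>words_le d (Suc n). \<Sum>b\<in>words_le d (Suc m).
           (if a = [] \<and> b = [] then x [] else 0) * subst_word v a u * subst_word v b w)
      + (\<Sum>a\<in>words_le d (Suc n). \<Sum>b\<in>words_le d (Suc m).
           on_cons (\<lambda>i t. spair (tshift i x) t b) a * subst_word v a u * subst_word v b w)
      + (\<Sum>a\<in>words_le d (Suc n). \<Sum>b\<in>words_le d (Suc m).
           on_cons (\<lambda>i t. spair (tshift i x) a t) b * subst_word v a u * subst_word v b w)"
    unfolding Tv_coprod_def by (subst spair_rec) (simp add: distrib_right sum.distrib)
  also have "(\<Sum>a\<in>words_le d (Suc n). \<Sum>b\<in>words_le d (Suc m).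
           on_cons (\<lambda>i t. spair (tshift i x) a t) b * subst_word v a u * subst_word v b w)
      = (\<Sum>i\<in>{1..d}. \<Sum>a\<in>words_le d (Suc n). \<Sum>b\<in>words_le d m.
           spair (tshift i x) a b * subst_word v a u * subst_word v (i # b) w)"
  proof -
    have "(\<Sum>a\<in>words_le d (Suc n). \<Sum>b\<in>words_le d (Suc m).
           on_cons (\<lambda>i t. spair (tshift i x) a t) b * subst_word v a u * subst_word v b w)
      = (\<Sum>a\<in>words_le d (Suc n). \<Sum>i\<in>{1..d}. \<Sum>b\<in>words_le d m.
           spair (tshift i x) a b * subst_word v a u * subst_word v (i # b) w)"
      by (intro sum.cong refl) (subst sum_words_le_Suc, simp)
    also have "\<dots> = (\<Sum>i\<in>{1..d}. \<Sum>a\<in>words_le d (Suc n). \<Sum>b\<in>words_le d m.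
           spair (tshift i x) a b * subst_word v a u * subst_word v (i # b) w)"
      by (rule sum.swap)
    finally show ?thesis .
  qed
  finally show ?thesis
    by (simp add: sum_words_le_Suc)
qed

lemma Tv_coprod_Cons_left:
  "(\<Sum>k\<le>length u. subst_letter v i (take k u) * Tv_coprod d v y n m (drop k u) w)
     = (\<Sum>a\<in>words_le d n. \<Sum>b\<in>words_le d m. spair y a b * subst_word v (i # a) u * subst_word v b w)"
proof -
  have "(\<Sum>k\<le>length u. subst_letter v i (take k u) * Tv_coprod d v y n m (drop k u) w)
      = (\<Sum>a\<in>words_le d n. \<Sum>b\<in>words_le d m. spair y a b
          * (\<Sum>k\<le>length u. subst_letter v i (take k u) * subst_word v a (drop k u)) * subst_word v b w)"
    unfolding Tv_coprod_def
    by (simp add: sum_distrib_left sum_distrib_right sum.swap[of _ "{..length u}"] algebra_simps)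
  then show ?thesis by (simp add: subst_word_Cons tmul_def)
qed

lemma Tv_coprod_Cons_right:
  "(\<Sum>k\<le>length w. subst_letter v i (take k w) * Tv_coprod d v y n m u (drop k w))
     = (\<Sum>a\<in>words_le d n. \<Sum>b\<in>words_le d m. spair y a b * subst_word v a u * subst_word v (i # b) w)"
proof -
  have "(\<Sum>k\<le>length w. subst_letter v i (take k w) * Tv_coprod d v y n m u (drop k w))
      = (\<Sum>a\<in>words_le d n. \<Sum>b\<in>words_le d m. spair y a b * subst_word v a u
          * (\<Sum>k\<le>length w. subst_letter v i (take k w) * subst_word v b (drop k w)))"
    unfolding Tv_coprod_def
    by (simp add: sum_distrib_left sum_distrib_right sum.swap[of _ "{..length w}"] algebra_simps)
  then show ?thesis by (simp add: subst_word_Cons tmul_def)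
qed

text \<open>\<open>T\<^sub>v\<close> is a coalgebra morphism for the deshuffle coproduct.\<close>
lemma spair_Tv:
  assumes v: "primitive_subst d v" and "length u \<le> n" "length w \<le> m"
  shows "spair (Tv d v x) u w = Tv_coprod d v x (Suc n) (Suc m) u w"
  using assms(2,3)
proof (induction "length u + length w" arbitrary: u w x n m rule: less_induct)
  case less
  note q0 = subst_letter_Nil[OF primitive_subst_admissible[OF v]]
  have left: "subst_letter v i (take k u) * spair (Tv d v (tshift i x)) (drop k u) w
      = subst_letter v i (take k u) * Tv_coprod d v (tshift i x) n (Suc m) (drop k u) w"
    if "i \<in> {1..d}" for i k
  proof (cases "k = 0 \<or> u = []")
    case False
    then obtain n' where "n = Suc n'" "length (drop k u) \<le> n'"
      using less.prems(1) by (cases n) auto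
    then show ?thesis using less False by simp
  qed (use q0 that in auto)
  have right: "subst_letter v i (take k w) * spair (Tv d v (tshift i x)) u (drop k w)
      = subst_letter v i (take k w) * Tv_coprod d v (tshift i x) (Suc n) m u (drop k w)"
    if "i \<in> {1..d}" for i k
  proof (cases "k = 0 \<or> w = []")
    case False
    then obtain m' where "m = Suc m'" "length (drop k w) \<le> m'"
      using less.prems(2) by (cases m) auto
    then show ?thesis using less False by simp
  qed (use q0 that in auto)
  have "spair (Tv d v x) u w = x [] * tunit u * tunit w
    + (\<Sum>i\<in>{1..d}. \<Sum>k\<le>length u. subst_letter v i (take k u) * Tv_coprod d v (tshift i x) n (Suc m) (drop k u) w)
    + (\<Sum>i\<in>{1..d}. \<Sum>k\<le>length w. subst_letter v i (take k w) * Tv_coprod d v (tshift i x) (Suc n) m u (drop k w))"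
    by (subst spair_Tv_rec[OF v]) (intro arg_cong2[where f="(+)"] sum.cong refl left right)
  then show ?case
    by (simp only: Tv_coprod_Cons_left Tv_coprod_Cons_right Tv_coprod_Suc)
qed

lemma Tv_coprod_multiplicative:
  assumes "admissible_subst d v" "\<forall>a\<in>words d. \<forall>b\<in>words d. spair x a b = x a * x b"
    and "length u \<le> n" "length w \<le> m"
  shows "Tv_coprod d v x n m u w = Tv d v x u * Tv d v x w"
proof -
  have "Tv_coprod d v x n m u w
      = (\<Sum>a\<in>words_le d n. \<Sum>b\<in>words_le d m. (x a * subst_word v a u) * (x b * subst_word v b w))"
    unfolding Tv_coprod_def using assms(2) by (intro sum.cong refl) (auto simp: words_le_def)
  also have "\<dots> = Tv d v x u * Tv d v x w"
    by (simp add: sum_product Tv_eq_words_le[OF assms(1) assms(3)] Tv_eq_words_le[OF assms(1) assms(4)])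
  finally show ?thesis .
qed

lemma grouplike_Tv:
  assumes "primitive_subst d v" "grouplike d x"
  shows "grouplike d (Tv d v x)"
  unfolding grouplike_def
proof (intro conjI ballI)
  have v: "admissible_subst d v" using primitive_subst_admissible[OF assms(1)] .
  show "tser d (Tv d v x)" by (rule tser_Tv[OF v])
  show "Tv d v x [] = 1" using assms(2) by (simp add: grouplike_def)
  show "spair (Tv d v x) u w = Tv d v x u * Tv d v x w" for u w
    unfolding spair_Tv[OF assms(1) le_refl le_refl]
    by (rule Tv_coprod_multiplicative[OF v]) (use assms(2) in \<open>simp_all add: grouplike_def\<close>)
qed

section \<open>Lie polynomials and degrees\<close>

lemma lie_poly_tser: "x \<in> lie_poly d \<Longrightarrow> tser d x"
proof (induction rule: lie_poly.induct)
  case (lp_gen i)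
  then show ?case by (simp add: tser_letter)
next
  case (lp_bracket x y)
  then show ?case using tser_tmul by (simp add: tser_def)
qed (auto simp: tser_def tzero_def)

lemma lie_poly_primitive_subst:
  "\<forall>i\<in>{1..d}. v i \<in> lie_poly d \<Longrightarrow> primitive_subst d v"
  unfolding primitive_subst_def using lie_poly_tser lie_poly_primitive by blast

lemma lie_poly_sum: "finite I \<Longrightarrow> (\<And>i. i \<in> I \<Longrightarrow> f i \<in> lie_poly d) \<Longrightarrow> (\<lambda>w. \<Sum>i\<in>I. f i w) \<in> lie_poly d"
proof (induction I rule: finite_induct)
  case empty
  then show ?case using lie_poly.lp_zero by (simp add: tzero_def)
next
  case (insert i I)
  then have "(\<lambda>w. f i w + (\<Sum>i\<in>I. f i w)) \<in> lie_poly d"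
    by (intro lie_poly.lp_add) auto
  then show ?case using insert by simp
qed

lemma hcomp_tmul: "hcomp n (tmul x y) = (\<lambda>w. \<Sum>j\<le>n. tmul (hcomp j x) (hcomp (n - j) y) w)"
proof
  fix w :: word
  show "hcomp n (tmul x y) w = (\<Sum>j\<le>n. tmul (hcomp j x) (hcomp (n - j) y) w)"
  proof (cases "length w = n")
    case True
    have "(\<Sum>j\<le>n. tmul (hcomp j x) (hcomp (n - j) y) w)
        = (\<Sum>j\<le>n. \<Sum>i\<le>length w. if i = j then x (take i w) * y (drop i w) else 0)"
      unfolding tmul_def hcomp_def using True by (intro sum.cong refl) (auto simp: min_def)
    also have "\<dots> = tmul x y w"
      unfolding tmul_def using True by (subst sum.swap) simp
    finally show ?thesis using True by (simp add: hcomp_def)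
  next
    case False
    have "tmul (hcomp j x) (hcomp (n - j) y) w = 0" if "j \<le> n" for j
      unfolding tmul_def hcomp_def using False that by (intro sum.neutral) auto
    then show ?thesis using False by (simp add: hcomp_def)
  qed
qed

lemma hcomp_lie_poly: "x \<in> lie_poly d \<Longrightarrow> hcomp n x \<in> lie_poly d"
proof (induction arbitrary: n rule: lie_poly.induct)
  case (lp_gen i)
  have "hcomp n (letter i) = (if n = 1 then letter i else tzero)"
    by (auto simp: hcomp_def letter_def tzero_def)
  then show ?case using lp_gen by (simp add: lie_poly.lp_gen lie_poly.lp_zero)
next
  case lp_zero
  have "hcomp n tzero = tzero" by (auto simp: hcomp_def tzero_def)
  then show ?case using lie_poly.lp_zero by simp
next
  case (lp_add x y)
  have "hcomp n (\<lambda>w. x w + y w) = (\<lambda>w. hcomp n x w + hcomp n y w)" by (auto simp: hcomp_def)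
  then show ?case using lp_add lie_poly.lp_add by simp
next
  case (lp_scale x c)
  have "hcomp n (\<lambda>w. c * x w) = (\<lambda>w. c * hcomp n x w)" by (auto simp: hcomp_def)
  then show ?case using lp_scale lie_poly.lp_scale by simp
next
  case (lp_bracket x y)
  have swap: "(\<Sum>j\<le>n. tmul (hcomp j y) (hcomp (n - j) x) w) = (\<Sum>j\<le>n. tmul (hcomp (n - j) y) (hcomp j x) w)" for w
    by (rule sum.reindex_bij_witness[of _ "\<lambda>j. n - j" "\<lambda>j. n - j"]) auto
  have "hcomp n (\<lambda>w. tmul x y w - tmul y x w) = (\<lambda>w. hcomp n (tmul x y) w - hcomp n (tmul y x) w)"
    by (auto simp: hcomp_def)
  also have "\<dots> = (\<lambda>w. \<Sum>j\<le>n. tmul (hcomp j x) (hcomp (n - j) y) w - tmul (hcomp (n - j) y) (hcomp j x) w)"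
    unfolding hcomp_tmul swap by (simp add: sum_subtractf)
  finally have "hcomp n (\<lambda>w. tmul x y w - tmul y x w)
      = (\<lambda>w. \<Sum>j\<le>n. tmul (hcomp j x) (hcomp (n - j) y) w - tmul (hcomp (n - j) y) (hcomp j x) w)" .
  then show ?case
    using lp_bracket by (auto intro!: lie_poly_sum lie_poly.lp_bracket)
qed

lemma trunc_lie_poly: "x \<in> lie_poly d \<Longrightarrow> trunc N x \<in> lie_poly d"
proof -
  assume "x \<in> lie_poly d"
  moreover have "trunc N x = (\<lambda>w. \<Sum>n\<le>N. hcomp n x w)"
    by (rule ext) (auto simp: trunc_def hcomp_def)
  ultimately show ?thesis by (auto intro!: lie_poly_sum hcomp_lie_poly)
qed

lemma Tv_lie_poly:
  assumes "admissible_subst d v" "\<forall>i\<in>{1..d}. v i \<in> lie_poly d" "x \<in> lie_poly d"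
  shows "Tv d v x \<in> lie_poly d"
  using assms(3)
proof (induction rule: lie_poly.induct)
  case (lp_gen i)
  then have "subst_letter v i \<in> lie_poly d"
    unfolding subst_letter_def using assms(2) by (intro lie_poly.lp_add lie_poly.lp_gen) auto
  then show ?case using lp_gen Tv_letter[OF assms(1)] by simp
next
  case lp_zero
  then show ?case using lie_poly.lp_zero by (simp add: tzero_def Tv_words_le)
next
  case (lp_add x y)
  have "Tv d v (\<lambda>w. x w + y w) = (\<lambda>u. Tv d v x u + Tv d v y u)"
    using Tv_lin[of d v 1 x 1 y] by (auto intro!: ext)
  then show ?case using lp_add lie_poly.lp_add by simp
next
  case (lp_scale x c)
  have "Tv d v (\<lambda>w. c * x w) = (\<lambda>u. c * Tv d v x u)" by (rule ext) (rule Tv_scale)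
  then show ?case using lp_scale lie_poly.lp_scale by simp
next
  case (lp_bracket x y)
  have "Tv d v (\<lambda>w. tmul x y w - tmul y x w)
      = (\<lambda>u. tmul (Tv d v x) (Tv d v y) u - tmul (Tv d v y) (Tv d v x) u)"
    by (rule ext) (simp add: Tv_diff Tv_tmul[OF assms(1)])
  then show ?case using lp_bracket lie_poly.lp_bracket by simp
qed

definition deg_le :: "nat \<Rightarrow> tseries \<Rightarrow> bool" where
  "deg_le n x \<longleftrightarrow> (\<forall>w. n < length w \<longrightarrow> x w = 0)"

lemma deg_le_tmul: "deg_le n x \<Longrightarrow> deg_le m y \<Longrightarrow> deg_le (n + m) (tmul x y)"
  unfolding deg_le_def using tmul_vanish_beyond[of n x m y] by blast

lemma deg_le_trunc: "deg_le n (trunc n x)"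
  by (simp add: deg_le_def trunc_def)

lemma deg_le_trunc_eq: "deg_le n x \<Longrightarrow> trunc n x = x"
  by (auto simp: deg_le_def trunc_def)

lemma lie_poly_deg_le: "x \<in> lie_poly d \<Longrightarrow> \<exists>n. deg_le n x"
proof (induction rule: lie_poly.induct)
  case (lp_gen i)
  have "deg_le 1 (letter i)" by (simp add: deg_le_def letter_def)
  then show ?case ..
next
  case (lp_add x y)
  then obtain n m where "deg_le n x" "deg_le m y" by blast
  then have "deg_le (n + m) (\<lambda>w. x w + y w)" by (simp add: deg_le_def)
  then show ?case ..
next
  case (lp_bracket x y)
  then obtain n m where "deg_le n x" "deg_le m y" by blast
  then have "deg_le (n + m) (\<lambda>w. tmul x y w - tmul y x w)"
    using deg_le_tmul[of n x m y] deg_le_tmul[of m y n x] by (simp add: deg_le_def add.commute)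
  then show ?case ..
qed (auto simp: deg_le_def tzero_def)

lemma subst_word_deg_le:
  assumes "\<forall>i\<in>{1..d}. deg_le K (subst_letter v i)" "a \<in> words d"
  shows "deg_le (K * length a) (subst_word v a)"
  using assms(2)
proof (induction a)
  case Nil
  show ?case by (simp add: deg_le_def tunit_def)
next
  case (Cons i a)
  then show ?case using assms(1) deg_le_tmul by (simp add: subst_word_Cons)
qed

lemma Tv_deg_le:
  assumes "admissible_subst d v" "\<forall>i\<in>{1..d}. deg_le K (subst_letter v i)" "deg_le N x"
  shows "deg_le (N * K) (Tv d v x)"
  unfolding deg_le_def Tv_words_le
proof (intro allI impI sum.neutral ballI)
  fix u :: word and a assume u: "N * K < length u" and a: "a \<in> words_le d (length u)"
  show "x a * subst_word v a u = 0"
  proof (cases "N < length a")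
    case True
    then show ?thesis using assms(3) by (simp add: deg_le_def)
  next
    case False
    then have "K * length a < length u"
      using u by (metis le_less_trans mult.commute mult_le_mono2 not_less)
    then show ?thesis
      using subst_word_deg_le[OF assms(2)] a by (simp add: words_le_def deg_le_def)
  qed
qed

lemma lie_poly_subst_deg_le:
  assumes "\<forall>i\<in>{1..d}. v i \<in> lie_poly d"
  obtains K where "\<forall>i\<in>{1..d}. deg_le K (subst_letter v i)"
proof -
  have "\<forall>i\<in>{1..d}. \<exists>n. deg_le n (v i)"
    using lie_poly_deg_le assms by blast
  then obtain n where n: "\<forall>i\<in>{1..d}. deg_le (n i) (v i)"
    by metis
  have "deg_le (Suc (\<Sum>j\<in>{1..d}. n j)) (subst_letter v i)" if "i \<in> {1..d}" for i
  proof -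
    have "n i \<le> (\<Sum>j\<in>{1..d}. n j)" using that by (intro member_le_sum) auto
    then show ?thesis
      using n that by (auto simp: deg_le_def subst_letter_def letter_def)
  qed
  then show ?thesis using that by blast
qed

section \<open>Calculus on \<open>[0, T]\<close> and uniqueness for linear equations\<close>

lemma smooth_on_lin:
  assumes "smooth_on S f" "smooth_on S g"
  shows "smooth_on S (\<lambda>t. a * f t + b * g t)"
proof -
  obtain F where F: "F 0 = f" "\<forall>k. \<forall>t\<in>S. (F k has_real_derivative F (Suc k) t) (at t within S)"
    using assms(1) unfolding smooth_on_def by blast
  obtain G where G: "G 0 = g" "\<forall>k. \<forall>t\<in>S. (G k has_real_derivative G (Suc k) t) (at t within S)"
    using assms(2) unfolding smooth_on_def by blast
  show ?thesis
    unfolding smooth_on_def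
    by (rule exI[of _ "\<lambda>k t. a * F k t + b * G k t"]) (use F G in \<open>auto intro!: derivative_eq_intros\<close>)
qed

lemma smooth_on_const: "smooth_on S (\<lambda>t. c)"
  unfolding smooth_on_def
  by (rule exI[of _ "\<lambda>k t. if k = 0 then c else 0"]) (auto intro!: derivative_eq_intros)

lemma smooth_on_cmult: "smooth_on S f \<Longrightarrow> smooth_on S (\<lambda>t. f t * c)"
  using smooth_on_lin[of S f "\<lambda>t. 0" c 0] smooth_on_const[of S 0] by (simp add: mult.commute)

lemma smooth_on_sum:
  "finite I \<Longrightarrow> (\<And>i. i \<in> I \<Longrightarrow> smooth_on S (f i)) \<Longrightarrow> smooth_on S (\<lambda>t. \<Sum>i\<in>I. f i t)"
proof (induction I rule: finite_induct)
  case empty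
  then show ?case using smooth_on_const[of S 0] by simp
next
  case (insert i I)
  then show ?case using smooth_on_lin[of S "f i" "\<lambda>t. \<Sum>i\<in>I. f i t" 1 1] by simp
qed

lemma smooth_on_cong:
  assumes "smooth_on S g" "\<And>t. t \<in> S \<Longrightarrow> g t = h t"
  shows "smooth_on S h"
proof -
  obtain F where F: "F 0 = g" "\<forall>k. \<forall>t\<in>S. (F k has_real_derivative F (Suc k) t) (at t within S)"
    using assms(1) unfolding smooth_on_def by blast
  define H where "H k = (if k = 0 then h else F k)" for k
  have "(H k has_real_derivative H (Suc k) t) (at t within S)" if t: "t \<in> S" for k t
  proof (cases "k = 0")
    case True
    have "(g has_real_derivative F 1 t) (at t within S)" using F t by force
    then have "(h has_real_derivative F 1 t) (at t within S)"
      by (rule has_field_derivative_transform_within[OF _ zero_less_one t]) (use assms(2) in auto)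
    then show ?thesis using True by (simp add: H_def)
  qed (use F t in \<open>simp add: H_def\<close>)
  moreover have "H 0 = h" by (simp add: H_def)
  ultimately show ?thesis unfolding smooth_on_def by blast
qed

lemma smooth_on_has_derivative:
  assumes "\<forall>w. smooth_on S (\<lambda>t. X t w)"
  shows "\<exists>X'. \<forall>t\<in>S. \<forall>w. ((\<lambda>s. X s w) has_real_derivative X' t w) (at t within S)"
proof -
  have "\<forall>w. \<exists>g. \<forall>t\<in>S. ((\<lambda>s. X s w) has_real_derivative g t) (at t within S)"
    using assms unfolding smooth_on_def by metis
  then obtain G where "\<forall>w. \<forall>t\<in>S. ((\<lambda>s. X s w) has_real_derivative G w t) (at t within S)"
    by metis
  then show ?thesis by (intro exI[of _ "\<lambda>t w. G w t"]) simp
qed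

lemma smooth_on_Tv:
  assumes "\<And>w. smooth_on S (\<lambda>t. X t w)"
  shows "smooth_on S (\<lambda>t. Tv d v (X t) u)"
  unfolding Tv_words_le by (intro smooth_on_sum smooth_on_cmult assms) simp

lemma smooth_on_trunc:
  assumes "\<And>w. smooth_on S (\<lambda>t. X t w)"
  shows "smooth_on S (\<lambda>t. trunc M (X t) u)"
  unfolding trunc_def using assms smooth_on_const[of S 0] by (cases "length u \<le> M") simp_all

lemma has_real_derivative_Tv:
  assumes "\<And>w. ((\<lambda>s. X s w) has_real_derivative X' w) (at t within S)"
  shows "((\<lambda>s. Tv d v (X s) u) has_real_derivative Tv d v X' u) (at t within S)"
  unfolding Tv_words_le by (intro DERIV_sum DERIV_cmult_right assms)

lemma has_real_derivative_tmul_left: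
  assumes "\<And>w. ((\<lambda>s. X s w) has_real_derivative X' w) (at t within S)"
  shows "((\<lambda>s. tmul c (X s) u) has_real_derivative tmul c X' u) (at t within S)"
  unfolding tmul_def by (intro DERIV_sum DERIV_cmult assms)

lemma has_real_derivative_unique_Icc:
  fixes T :: real
  assumes "0 < T" "t \<in> {0..T}"
    and "(f has_real_derivative D1) (at t within {0..T})" "(f has_real_derivative D2) (at t within {0..T})"
  shows "D1 = D2"
proof (rule has_field_derivative_unique[OF assms(3,4)])
  show "at t within {0..T} \<noteq> bot"
    using assms(1,2) trivial_limit_within[of t "{0..T}"] islimpt_Icc[of 0 T t] by auto
qed

lemma the_derivative_Icc:
  fixes T :: real
  assumes "0 < T" "t \<in> {0..T}" "(f has_real_derivative D) (at t within {0..T})"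
  shows "(THE D. (f has_real_derivative D) (at t within {0..T})) = D"
  using assms has_real_derivative_unique_Icc by blast

lemma has_real_derivative_constant_on_Icc:
  fixes T :: real
  assumes "0 < T" "t \<in> {0..T}" "\<forall>s\<in>{0..T}. f s = c" "(f has_real_derivative D) (at t within {0..T})"
  shows "D = 0"
proof -
  have "(f has_real_derivative 0) (at t within {0..T})"
    by (rule has_field_derivative_transform_within[OF DERIV_const zero_less_one assms(2)])
       (use assms(3) in auto)
  then show ?thesis using has_real_derivative_unique_Icc[OF assms(1,2,4)] by simp
qed

text \<open>The coefficient of \<open>w\<close> in \<open>Z \<otimes> A\<close> only involves coefficients of \<open>Z\<close> on shorter words
  when \<open>A\<close> has no constant term, so by induction on \<open>|w|\<close> the difference of two solutions
  has derivative zero.\<close>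
lemma tmul_ode_unique:
  fixes T :: real
  assumes "0 < T"
    and A: "\<And>t. t \<in> {0..T} \<Longrightarrow> A t [] = 0"
    and Y: "\<And>t w. t \<in> {0..T} \<Longrightarrow> length w \<le> M \<Longrightarrow>
               ((\<lambda>s. Y s w) has_real_derivative tmul (Y t) (A t) w) (at t within {0..T})"
    and Z: "\<And>t w. t \<in> {0..T} \<Longrightarrow> length w \<le> M \<Longrightarrow>
               ((\<lambda>s. Z s w) has_real_derivative tmul (Z t) (A t) w) (at t within {0..T})"
    and init: "\<And>w. length w \<le> M \<Longrightarrow> Y 0 w = Z 0 w"
    and "t \<in> {0..T}" "length w \<le> M"
  shows "Y t w = Z t w"
  using assms(6,7)
proof (induction "length w" arbitrary: w t rule: less_induct)
  case less
  have "((\<lambda>s. Y s w - Z s w) has_real_derivative 0) (at t within {0..T})" if t: "t \<in> {0..T}" for t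
  proof -
    have "tmul (Y t) (A t) w - tmul (Z t) (A t) w = tmul (\<lambda>p. Y t p - Z t p) (A t) w"
      by (simp add: tmul_diff_left)
    also have "\<dots> = 0"
      unfolding tmul_def
    proof (intro sum.neutral ballI)
      fix i assume "i \<in> {..length w}"
      then show "(Y t (take i w) - Z t (take i w)) * A t (drop i w) = 0"
        using less t A[OF t] by (cases "i < length w") auto
    qed
    finally show ?thesis
      using DERIV_diff[OF Y[OF t less.prems(2)] Z[OF t less.prems(2)]] by simp
  qed
  then obtain c where c: "\<forall>s\<in>{0..T}. Y s w - Z s w = c"
    using has_field_derivative_zero_constant[of "{0..T}" "\<lambda>s. Y s w - Z s w"] by auto
  have "(0::real) \<in> {0..T}" using assms(1) by simp
  then have "Y t w - Z t w = Y 0 w - Z 0 w" using c less.prems(1) by simp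
  then show ?case using init[OF less.prems(2)] by simp
qed

lemma ode_sol_unique:
  fixes T :: real
  assumes "0 < T" "ode_sol d T A Z0 Z1" "ode_sol d T A Z0 Z2" "\<And>t. t \<in> {0..T} \<Longrightarrow> A t [] = 0"
    and "t \<in> {0..T}"
  shows "Z1 t = Z2 t"
proof
  fix w
  show "Z1 t w = Z2 t w"
    by (rule tmul_ode_unique[where A=A and M="length w" and Y=Z1 and Z=Z2, OF assms(1,4)])
       (use assms(2,3,5) in \<open>simp_all add: ode_sol_def\<close>)
qed

lemma ode_solN_has_derivative:
  assumes "ode_solN d T M A W0 W" "t \<in> {0..T}" "length w \<le> M"
  shows "((\<lambda>s. W s w) has_real_derivative tmul (W t) (A t) w) (at t within {0..T})"
proof -
  have "((\<lambda>s. W s w) has_real_derivative tmulN M (W t) (A t) w) (at t within {0..T})"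
    using assms(1,2) unfolding ode_solN_def by blast
  then show ?thesis using assms(3) by (simp add: tmulN_def trunc_def)
qed

lemma ode_solN_unique:
  fixes T :: real
  assumes "0 < T" "ode_solN d T M A W0 W1" "ode_solN d T M A W0 W2" "\<And>t. t \<in> {0..T} \<Longrightarrow> A t [] = 0"
    and "t \<in> {0..T}"
  shows "W1 t = W2 t"
proof
  fix w
  show "W1 t w = W2 t w"
  proof (cases "length w \<le> M")
    case True
    show ?thesis
      by (rule tmul_ode_unique[OF assms(1,4) ode_solN_has_derivative[OF assms(2)]
            ode_solN_has_derivative[OF assms(3)]])
         (use assms(2,3,5) True in \<open>simp_all add: ode_solN_def\<close>)
  next
    case False
    then show ?thesis using assms(2,3,5) by (simp add: ode_solN_def inTN_def)
  qed
qed

section \<open>Signature paths and models\<close>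

lemma grouplike_intro:
  assumes "tser d x" "x \<noteq> tzero" "\<forall>u\<in>words d. \<forall>w\<in>words d. spair x u w = x u * x w"
  shows "grouplike d x"
proof -
  have "x [] = 1"
  proof (rule ccontr)
    assume "x [] \<noteq> 1"
    moreover have "x w = x [] * x w" if "w \<in> words d" for w
      using assms(3) that by (metis spair_Nil_left words_Nil)
    ultimately have "x w = 0" for w
      using assms(1) by (cases "w \<in> words d") (auto simp: tser_def)
    then show False using assms(2) by (auto simp: tzero_def)
  qed
  then show ?thesis using assms by (simp add: grouplike_def)
qed

lemma grouplike_nonzero: "grouplike d x \<Longrightarrow> x \<noteq> tzero"
  by (auto simp: grouplike_def tzero_def)

lemma grouplike_iff:
  "grouplike d x \<longleftrightarrow> tser d x \<and> x \<noteq> tzero \<and> (\<forall>u\<in>words d. \<forall>w\<in>words d. spair x u w = x u * x w)"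
  using grouplike_intro grouplike_nonzero by (auto simp: grouplike_def)

lemma sgrp_iff_grouplike:
  "sgrp d T X \<longleftrightarrow> (\<forall>t\<in>{0..T}. grouplike d (X t)) \<and> (\<forall>w. smooth_on {0..T} (\<lambda>t. X t w))"
  unfolding sgrp_def grouplike_iff by blast

lemma sgrm_iff_sgrp:
  "sgrm d T X \<longleftrightarrow> (\<forall>s\<in>{0..T}. sgrp d T (X s)) \<and>
     (\<forall>s\<in>{0..T}. \<forall>u\<in>{0..T}. \<forall>t\<in>{0..T}. tmul (X s u) (X u t) = X s t)"
  unfolding sgrm_def sgrp_def by blast

lemma Nsgrm_iff_Nsgrp:
  "Nsgrm d T N Y \<longleftrightarrow> (\<forall>s\<in>{0..T}. Nsgrp d T N (Y s)) \<and>
     (\<forall>s\<in>{0..T}. \<forall>u\<in>{0..T}. \<forall>t\<in>{0..T}. tmulN N (Y s u) (Y u t) = Y s t)"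
  unfolding Nsgrm_def Nsgrp_def by blast

lemma sgrm_grouplike: "sgrm d T X \<Longrightarrow> s \<in> {0..T} \<Longrightarrow> t \<in> {0..T} \<Longrightarrow> grouplike d (X s t)"
  by (simp add: sgrm_iff_sgrp sgrp_iff_grouplike)

lemma sgrp_cong: "sgrp d T X \<Longrightarrow> (\<And>t. t \<in> {0..T} \<Longrightarrow> Y t = X t) \<Longrightarrow> sgrp d T Y"
  unfolding sgrp_iff_grouplike by (auto intro: smooth_on_cong)

lemma sgrm_cong:
  "sgrm d T X \<Longrightarrow> (\<And>s t. s \<in> {0..T} \<Longrightarrow> t \<in> {0..T} \<Longrightarrow> Y s t = X s t) \<Longrightarrow> sgrm d T Y"
  unfolding sgrm_iff_sgrp by (auto intro: sgrp_cong)

lemma sgrp_Tv: "primitive_subst d v \<Longrightarrow> sgrp d T X \<Longrightarrow> sgrp d T (\<lambda>t. Tv d v (X t))"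
  unfolding sgrp_iff_grouplike by (simp add: grouplike_Tv smooth_on_Tv)

lemma sgrm_Tv: "primitive_subst d v \<Longrightarrow> sgrm d T X \<Longrightarrow> sgrm d T (\<lambda>s t. Tv d v (X s t))"
  unfolding sgrm_iff_sgrp by (simp add: sgrp_Tv Tv_tmul[OF primitive_subst_admissible, symmetric])

lemma sgrm_path_sgrp: "0 < T \<Longrightarrow> sgrm d T X \<Longrightarrow> sgrp d T (X 0)"
  unfolding sgrm_iff_sgrp by simp

lemma sgrm_diag_unit:
  assumes "sgrm d T X" "t \<in> {0..T}"
  shows "X t t = tunit"
proof -
  have "X t t [] = 1" "tmul (X t t) (X t t) = X t t"
    using assms sgrm_grouplike[OF assms(1,2,2)] by (simp_all add: sgrm_def grouplike_def)
  then show ?thesis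
    using tinv_left[of "X t t"] by (metis tmul_assoc tmul_unit_left)
qed

lemma sgrm_path_model:
  assumes "0 < T" "sgrm d T X" "s \<in> {0..T}" "t \<in> {0..T}"
  shows "path_model (X 0) s t = X s t"
proof -
  have "0 \<in> {0..T}" using assms(1) by simp
  then have "X 0 s [] = 1" "X 0 t = tmul (X 0 s) (X s t)"
    using assms sgrm_grouplike by (simp_all add: sgrm_def grouplike_def)
  then show ?thesis
    using tinv_left[of "X 0 s"] by (simp add: path_model_def tmul_assoc[symmetric])
qed

lemma path_model_Tv:
  assumes "admissible_subst d v" "X s [] = 1"
  shows "path_model (\<lambda>t. Tv d v (X t)) s t = Tv d v (path_model X s t)"
  using assms by (simp add: path_model_def Tv_tmul Tv_tinv)

lemma trunc_grouplike:
  assumes "grouplike d x"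
  shows "inTN d M (trunc M x)" "trunc M x \<noteq> tzero"
    and "u \<in> words d \<Longrightarrow> w \<in> words d \<Longrightarrow> length u + length w \<le> M \<Longrightarrow>
         spair (trunc M x) u w = trunc M x u * trunc M x w"
proof -
  show "inTN d M (trunc M x)"
    using assms by (auto simp: inTN_def trunc_def tser_def grouplike_def)
  have "trunc M x [] = 1" using assms by (simp add: trunc_def grouplike_def)
  then show "trunc M x \<noteq> tzero" by (auto simp: tzero_def)
  show "spair (trunc M x) u w = trunc M x u * trunc M x w"
    if "u \<in> words d" "w \<in> words d" "length u + length w \<le> M"
    using that assms spair_trunc[OF that(3)] by (simp add: trunc_def grouplike_def)
qed

lemma Nsgrp_trunc: "sgrp d T Z \<Longrightarrow> Nsgrp d T M (\<lambda>t. trunc M (Z t))"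
  unfolding Nsgrp_def sgrp_iff_grouplike by (auto simp: trunc_grouplike smooth_on_trunc)

lemma Nsgrm_trunc: "sgrm d T X \<Longrightarrow> Nsgrm d T L (\<lambda>s t. trunc L (X s t))"
  unfolding Nsgrm_iff_Nsgrp sgrm_iff_sgrp by (simp add: Nsgrp_trunc tmulN_def trunc_tmul)

lemma Nsgrp_cong: "Nsgrp d T M X \<Longrightarrow> (\<And>t. t \<in> {0..T} \<Longrightarrow> Y t = X t) \<Longrightarrow> Nsgrp d T M Y"
  unfolding Nsgrp_def by (auto intro: smooth_on_cong)

lemma path_modelN_trunc: "path_modelN M (\<lambda>t. trunc M (Z t)) s t = trunc M (path_model Z s t)"
  by (simp add: path_modelN_def path_model_def tmulN_def trunc_tinv trunc_tmul)

lemma sgrp_has_derivative: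
  assumes "0 < T" "sgrp d T X"
  shows "\<exists>X'. (\<forall>t\<in>{0..T}. \<forall>w. ((\<lambda>s. X s w) has_real_derivative X' t w) (at t within {0..T}))
    \<and> (\<forall>t\<in>{0..T}. X' t [] = 0)"
proof -
  have "\<forall>w. smooth_on {0..T} (\<lambda>t. X t w)" using assms(2) by (simp add: sgrp_def)
  from smooth_on_has_derivative[OF this] obtain X'
    where X': "\<forall>t\<in>{0..T}. \<forall>w. ((\<lambda>s. X s w) has_real_derivative X' t w) (at t within {0..T})" ..
  have X1: "\<forall>s\<in>{0..T}. X s [] = 1" using assms(2) by (simp add: sgrp_iff_grouplike grouplike_def)
  have "X' t [] = 0" if "t \<in> {0..T}" for t
    by (rule has_real_derivative_constant_on_Icc[OF assms(1) that X1]) (use X' that in simp)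
  then show ?thesis using X' by (intro exI[of _ X']) simp
qed

lemma ddiag_path_model:
  assumes "0 < T" "t \<in> {0..T}" "\<And>w. ((\<lambda>s. X s w) has_real_derivative X' w) (at t within {0..T})"
  shows "ddiag T (path_model X) t = tmul (tinv (X t)) X'"
proof
  fix w
  have "((\<lambda>s. path_model X t s w) has_real_derivative tmul (tinv (X t)) X' w) (at t within {0..T})"
    unfolding path_model_def by (rule has_real_derivative_tmul_left) (rule assms(3))
  then show "ddiag T (path_model X) t w = tmul (tinv (X t)) X' w"
    unfolding ddiag_def by (rule the_derivative_Icc[OF assms(1,2)])
qed

lemma ode_sol_Tv_sgrp:
  assumes "0 < T" "admissible_subst d v" "sgrp d T X"
  shows "ode_sol d T (\<lambda>t. Tv d v (ddiag T (path_model X) t)) (Tv d v (X 0)) (\<lambda>t. Tv d v (X t))"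
    and "t \<in> {0..T} \<Longrightarrow> Tv d v (ddiag T (path_model X) t) [] = 0"
proof -
  obtain X' where X': "\<And>t w. t \<in> {0..T} \<Longrightarrow> ((\<lambda>s. X s w) has_real_derivative X' t w) (at t within {0..T})"
    and X'_Nil: "\<And>t. t \<in> {0..T} \<Longrightarrow> X' t [] = 0"
    using sgrp_has_derivative[OF assms(1,3)] by blast
  have dd: "ddiag T (path_model X) t = tmul (tinv (X t)) (X' t)" if "t \<in> {0..T}" for t
    using ddiag_path_model[OF assms(1) that X'[OF that]] .
  have X1: "X t [] = 1" if "t \<in> {0..T}" for t
    using assms(3) that by (simp add: sgrp_iff_grouplike grouplike_def)
  have key: "Tv d v (X' t) = tmul (Tv d v (X t)) (Tv d v (ddiag T (path_model X) t))"
    if "t \<in> {0..T}" for t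
    using tinv_right[of "X t"] X1[OF that]
    by (simp add: dd[OF that] Tv_tmul[OF assms(2), symmetric] tmul_assoc[symmetric])
  have dZ: "((\<lambda>s. Tv d v (X s) w) has_real_derivative
      tmul (Tv d v (X t)) (Tv d v (ddiag T (path_model X) t)) w) (at t within {0..T})"
    if "t \<in> {0..T}" for t w
    unfolding key[OF that, symmetric] by (rule has_real_derivative_Tv) (rule X'[OF that])
  then show "ode_sol d T (\<lambda>t. Tv d v (ddiag T (path_model X) t)) (Tv d v (X 0)) (\<lambda>t. Tv d v (X t))"
    unfolding ode_sol_def by (simp add: dZ tser_Tv[OF assms(2)])
  show "Tv d v (ddiag T (path_model X) t) [] = 0" if "t \<in> {0..T}"
    using that by (simp add: dd X'_Nil tinv_Nil X1)
qed

lemma sgrp_Tv_ode_unique: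
  assumes "0 < T" "admissible_subst d v" "sgrp d T X"
    and "ode_sol d T (\<lambda>t. Tv d v (ddiag T (path_model X) t)) (Tv d v (X 0)) Z" "t \<in> {0..T}"
  shows "Z t = Tv d v (X t)"
  using ode_sol_unique[OF assms(1,4) ode_sol_Tv_sgrp(1)[OF assms(1-3)] ode_sol_Tv_sgrp(2)[OF assms(1-3)]]
    assms(5) by simp

lemma sgrp_Tv_solution:
  assumes "0 < T" "primitive_subst d v" "sgrp d T X"
    and "ode_sol d T (\<lambda>t. Tv d v (ddiag T (path_model X) t)) (Tv d v (X 0)) Z"
  shows "\<forall>t\<in>{0..T}. grouplike d (Z t) \<and> Z t = Tv d v (X t)" and "sgrp d T Z"
    and "\<forall>s\<in>{0..T}. \<forall>t\<in>{0..T}. path_model Z s t = Tv d v (path_model X s t)"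
proof -
  have v: "admissible_subst d v" by (rule primitive_subst_admissible[OF assms(2)])
  have Z: "Z t = Tv d v (X t)" if "t \<in> {0..T}" for t
    by (rule sgrp_Tv_ode_unique[OF assms(1) v assms(3,4) that])
  show "sgrp d T Z" by (rule sgrp_cong[OF sgrp_Tv[OF assms(2,3)] Z])
  then show "\<forall>t\<in>{0..T}. grouplike d (Z t) \<and> Z t = Tv d v (X t)"
    using Z by (simp add: sgrp_iff_grouplike)
  show "\<forall>s\<in>{0..T}. \<forall>t\<in>{0..T}. path_model Z s t = Tv d v (path_model X s t)"
  proof (intro ballI)
    fix s t assume s: "s \<in> {0..T}" and t: "t \<in> {0..T}"
    have "X s [] = 1" using assms(3) s by (simp add: sgrp_iff_grouplike grouplike_def)
    then show "path_model Z s t = Tv d v (path_model X s t)"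
      using Z[OF s] Z[OF t] path_model_Tv[OF v, of X s t] by (simp add: path_model_def)
  qed
qed

lemma sgrm_Tv_solution:
  assumes "0 < T" "primitive_subst d v" "sgrm d T X"
    and "ode_sol d T (\<lambda>t. Tv d v (ddiag T (path_model (X 0)) t)) (Tv d v (X 0 0)) Z"
  shows "\<forall>s\<in>{0..T}. \<forall>t\<in>{0..T}. path_model Z s t = Tv d v (X s t)" and "sgrm d T (path_model Z)"
proof -
  show eq: "\<forall>s\<in>{0..T}. \<forall>t\<in>{0..T}. path_model Z s t = Tv d v (X s t)"
    using sgrp_Tv_solution(3)[OF assms(1,2) sgrm_path_sgrp[OF assms(1,3)] assms(4)]
      sgrm_path_model[OF assms(1,3)] by simp
  show "sgrm d T (path_model Z)"
    by (rule sgrm_cong[OF sgrm_Tv[OF assms(2,3)]]) (use eq in blast)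
qed

section \<open>Minimal extensions\<close>

lemma sgrm_has_ddiag:
  assumes "0 < T" "sgrm d T X" "s \<in> {0..T}"
  shows "((\<lambda>t. X s t w) has_real_derivative ddiag T X s w) (at s within {0..T})"
proof -
  have "\<forall>w. smooth_on {0..T} (\<lambda>t. X s t w)" using assms(2,3) by (simp add: sgrm_def)
  from smooth_on_has_derivative[OF this] obtain X'
    where "\<forall>t\<in>{0..T}. \<forall>w. ((\<lambda>t. X s t w) has_real_derivative X' t w) (at t within {0..T})" ..
  then have D: "((\<lambda>t. X s t w) has_real_derivative X' s w) (at s within {0..T})"
    using assms(3) by blast
  moreover have "ddiag T X s w = X' s w"
    unfolding ddiag_def by (rule the_derivative_Icc[OF assms(1,3) D])
  ultimately show ?thesis by simp
qed

lemma ddiag_Tv: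
  assumes "0 < T" "sgrm d T X" "s \<in> {0..T}"
  shows "ddiag T (\<lambda>s t. Tv d v (X s t)) s = Tv d v (ddiag T X s)"
proof
  fix u
  have "((\<lambda>t. Tv d v (X s t) u) has_real_derivative Tv d v (ddiag T X s) u) (at s within {0..T})"
    by (rule has_real_derivative_Tv) (rule sgrm_has_ddiag[OF assms])
  then show "ddiag T (\<lambda>s t. Tv d v (X s t)) s u = Tv d v (ddiag T X s) u"
    unfolding ddiag_def by (rule the_derivative_Icc[OF assms(1,3)])
qed

lemma lie_truncN_Nil: "x \<in> lie_truncN d N \<Longrightarrow> x [] = 0"
  by (auto simp: lie_truncN_def trunc_def dest: lie_poly_primitive simp: primitive_def)

lemma lie_truncN_Tv:
  assumes "admissible_subst d v" "\<forall>i\<in>{1..d}. v i \<in> lie_poly d"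
    and "\<forall>i\<in>{1..d}. deg_le K (subst_letter v i)" "x \<in> lie_truncN d N"
  shows "Tv d v x \<in> lie_truncN d (N * K)"
proof -
  obtain p where "p \<in> lie_poly d" and x: "x = trunc N p"
    using assms(4) by (auto simp: lie_truncN_def)
  then have "Tv d v x \<in> lie_poly d" "deg_le (N * K) (Tv d v x)"
    using Tv_lie_poly[OF assms(1,2) trunc_lie_poly] Tv_deg_le[OF assms(1,3) deg_le_trunc] by simp_all
  then show ?thesis
    unfolding lie_truncN_def using deg_le_trunc_eq by (metis image_eqI)
qed

lemma is_MinExt_Tv:
  assumes "0 < T" "\<forall>i\<in>{1..d}. v i \<in> lie_poly d"
    and "\<forall>i\<in>{1..d}. deg_le K (subst_letter v i)" "is_MinExt d T N Y X"
  shows "is_MinExt d T (N * K) (\<lambda>s t. trunc (N * K) (Tv d v (X s t))) (\<lambda>s t. Tv d v (X s t))"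
proof -
  have v: "primitive_subst d v" by (rule lie_poly_primitive_subst[OF assms(2)])
  have X: "sgrm d T X" using assms(4) by (simp add: is_MinExt_def)
  have "ddiag T (\<lambda>s t. Tv d v (X s t)) s \<in> lie_truncN d (N * K)" if "s \<in> {0..T}" for s
    unfolding ddiag_Tv[OF assms(1) X that]
    using lie_truncN_Tv[OF primitive_subst_admissible[OF v] assms(2,3)] assms(4) that
    by (simp add: is_MinExt_def)
  then show ?thesis
    unfolding is_MinExt_def using sgrm_Tv[OF v X] by (simp add: trunc_def)
qed

lemma good_Tv:
  assumes "0 < T" "\<forall>i\<in>{1..d}. v i \<in> lie_poly d" "good d T X"
  shows "good d T (\<lambda>s t. Tv d v (X s t))"
proof -
  obtain K where K: "\<forall>i\<in>{1..d}. deg_le K (subst_letter v i)"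
    using lie_poly_subst_deg_le[OF assms(2)] by blast
  obtain N Y where "is_MinExt d T N Y X" using assms(3) by (auto simp: good_def)
  note ME = is_MinExt_Tv[OF assms(1,2) K this]
  have "Nsgrm d T (N * K) (\<lambda>s t. trunc (N * K) (Tv d v (X s t)))"
    using ME Nsgrm_trunc by (simp add: is_MinExt_def)
  with ME show ?thesis unfolding good_def by blast
qed

lemma inTN_TvM: "admissible_subst d v \<Longrightarrow> inTN d M (TvM d v M x)"
  using tser_Tv[of d v x] by (auto simp: inTN_def TvM_def trunc_def tser_def)

lemma TvM_tmulN: "admissible_subst d v \<Longrightarrow> TvM d v M (tmulN M x y) = tmulN M (TvM d v M x) (TvM d v M y)"
  unfolding TvM_def tmulN_def trunc_Tv_trunc trunc_tmul by (simp add: Tv_tmul)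

lemma TvM_lin: "TvM d v M (\<lambda>w. a * x w + b * y w) = (\<lambda>w. a * TvM d v M x w + b * TvM d v M y w)"
  by (auto simp: TvM_def trunc_def Tv_lin)

lemma TvM_tunit: "TvM d v M tunit = tunit"
  by (simp add: TvM_def)

lemma TvM_trunc: "TvM d v M (trunc M x) = trunc M (Tv d v x)"
  by (simp add: TvM_def trunc_Tv_trunc)

lemma MinExt_ddiag:
  assumes "0 < T" "Nsgrm d T N Y" "is_MinExt d T N Y X" "t \<in> {0..T}"
  shows "ddiag T Y t = ddiag T X t"
proof
  fix w :: word
  have X: "sgrm d T X" and dX: "ddiag T X t \<in> lie_truncN d N"
    using assms(3,4) by (simp_all add: is_MinExt_def)
  show "ddiag T Y t w = ddiag T X t w"
  proof (cases "length w \<le> N")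
    case True
    have "((\<lambda>s. Y t s w) has_real_derivative ddiag T X t w) (at t within {0..T})"
      by (rule has_field_derivative_transform_within[OF sgrm_has_ddiag[OF assms(1) X assms(4)]
          zero_less_one assms(4)])
         (use assms(3,4) True in \<open>auto simp: is_MinExt_def\<close>)
    then show ?thesis unfolding ddiag_def by (rule the_derivative_Icc[OF assms(1,4)])
  next
    case False
    have "((\<lambda>s. Y t s w) has_real_derivative 0) (at t within {0..T})"
      by (rule has_field_derivative_transform_within[OF DERIV_const zero_less_one assms(4)])
         (use assms(2,4) False in \<open>auto simp: Nsgrm_def inTN_def\<close>)
    then have "ddiag T Y t w = 0" unfolding ddiag_def by (rule the_derivative_Icc[OF assms(1,4)])
    moreover have "ddiag T X t w = 0" using dX False by (auto simp: lie_truncN_def trunc_def)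
    ultimately show ?thesis by simp
  qed
qed

lemma sgrm_path_has_derivative:
  assumes "0 < T" "sgrm d T X" "t \<in> {0..T}"
  shows "((\<lambda>s. X 0 s w) has_real_derivative tmul (X 0 t) (ddiag T X t) w) (at t within {0..T})"
proof -
  have "((\<lambda>s. tmul (X 0 t) (X t s) w) has_real_derivative tmul (X 0 t) (ddiag T X t) w) (at t within {0..T})"
    by (rule has_real_derivative_tmul_left) (rule sgrm_has_ddiag[OF assms])
  moreover have "tmul (X 0 t) (X t s) w = X 0 s w" if "s \<in> {0..T}" for s
    using assms that by (simp add: sgrm_def)
  ultimately show ?thesis
    by (rule has_field_derivative_transform_within[OF _ zero_less_one assms(3)]) auto
qed

lemma ode_solN_trunc_Tv:
  assumes "0 < T" "admissible_subst d v" "sgrm d T X" "\<And>t. t \<in> {0..T} \<Longrightarrow> A t = Tv d v (ddiag T X t)"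
  shows "ode_solN d T M A tunit (\<lambda>t. trunc M (Tv d v (X 0 t)))"
  unfolding ode_solN_def
proof (intro conjI ballI allI)
  fix t w assume t: "t \<in> {0..T}"
  show "inTN d M (trunc M (Tv d v (X 0 t)))"
    using tser_Tv[OF assms(2)] by (auto simp: inTN_def trunc_def tser_def)
  show "((\<lambda>s. trunc M (Tv d v (X 0 s)) w) has_real_derivative
      tmulN M (trunc M (Tv d v (X 0 t))) (A t) w) (at t within {0..T})"
  proof (cases "length w \<le> M")
    case True
    have "((\<lambda>s. Tv d v (X 0 s) w) has_real_derivative Tv d v (tmul (X 0 t) (ddiag T X t)) w)
        (at t within {0..T})"
      by (rule has_real_derivative_Tv) (rule sgrm_path_has_derivative[OF assms(1,3) t])
    moreover have "tmulN M (trunc M (Tv d v (X 0 t))) (A t) = trunc M (Tv d v (tmul (X 0 t) (ddiag T X t)))"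
      by (simp add: tmulN_def trunc_tmul_left assms(4)[OF t] Tv_tmul[OF assms(2)])
    ultimately show ?thesis using True by (simp add: trunc_def)
  qed (simp add: tmulN_def trunc_def)
next
  have "(0::real) \<in> {0..T}" using assms(1) by simp
  then show "trunc M (Tv d v (X 0 0)) = tunit" by (simp add: sgrm_diag_unit[OF assms(3)])
qed

lemma ode_solN_MinExt_Tv:
  assumes "0 < T" "admissible_subst d v" "Nsgrm d T N Y" "is_MinExt d T N Y X"
  shows "ode_solN d T M (\<lambda>t. Tv d v (ddiag T Y t)) tunit (\<lambda>t. trunc M (Tv d v (X 0 t)))"
  using assms(4)
  by (intro ode_solN_trunc_Tv[OF assms(1,2)]) (simp_all add: is_MinExt_def MinExt_ddiag[OF assms(1,3,4)])

lemma truncated_Tv_solution: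
  assumes "0 < T" "\<forall>i\<in>{1..d}. v i \<in> lie_poly d" "Nsgrm d T N Y" "is_MinExt d T N Y X"
    and "ode_solN d T M (\<lambda>t. Tv d v (ddiag T Y t)) tunit W"
  shows "Nsgrp d T M W"
    and "\<forall>s\<in>{0..T}. \<forall>t\<in>{0..T}. path_modelN M W s t = TvM d v M (trunc M (X s t)) \<and>
           path_modelN M W s t = trunc M (Tv d v (X s t))"
proof -
  have v: "primitive_subst d v" by (rule lie_poly_primitive_subst[OF assms(2)])
  note v' = primitive_subst_admissible[OF v]
  have X: "sgrm d T X" using assms(4) by (simp add: is_MinExt_def)
  define W0 where "W0 t = trunc M (Tv d v (X 0 t))" for t
  have sol: "ode_solN d T M (\<lambda>t. Tv d v (ddiag T Y t)) tunit W0"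
    unfolding W0_def by (rule ode_solN_MinExt_Tv[OF assms(1) v' assms(3,4)])
  have "Tv d v (ddiag T Y t) [] = 0" if "t \<in> {0..T}" for t
  proof -
    have "ddiag T X t \<in> lie_truncN d N" using assms(4) that by (simp add: is_MinExt_def)
    then show ?thesis by (simp add: MinExt_ddiag[OF assms(1,3,4) that] lie_truncN_Nil)
  qed
  then have W: "W t = W0 t" if "t \<in> {0..T}" for t
    using ode_solN_unique[OF assms(1,5) sol _ that] by blast
  have "Nsgrp d T M W0"
    unfolding W0_def by (rule Nsgrp_trunc[OF sgrp_Tv[OF v sgrm_path_sgrp[OF assms(1) X]]])
  then show "Nsgrp d T M W" by (rule Nsgrp_cong) (rule W)
  have "path_modelN M W s t = trunc M (Tv d v (X s t))" if "s \<in> {0..T}" "t \<in> {0..T}" for s t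
  proof -
    have "X 0 s [] = 1"
      using sgrm_grouplike[OF X _ that(1)] assms(1) by (simp add: grouplike_def)
    then have "path_modelN M W s t = trunc M (Tv d v (path_model (X 0) s t))"
      using W that path_modelN_trunc[of M "\<lambda>t. Tv d v (X 0 t)" s t] path_model_Tv[OF v']
      by (simp add: path_modelN_def W0_def)
    then show ?thesis by (simp add: sgrm_path_model[OF assms(1) X that])
  qed
  then show "\<forall>s\<in>{0..T}. \<forall>t\<in>{0..T}. path_modelN M W s t = TvM d v M (trunc M (X s t)) \<and>
           path_modelN M W s t = trunc M (Tv d v (X s t))"
    by (simp add: TvM_trunc)
qed

theorem theorem2p24:
  fixes d :: nat and T :: real and v :: "nat \<Rightarrow> tseries"
  assumes "1 \<le> d" and "0 < T"
  shows
   "((\<forall>i\<in>{1..d}. lie_series d (v i)) \<longrightarrow>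
      (\<forall>X. sgrp d T X \<longrightarrow>
         (\<exists>Z. ode_sol d T (\<lambda>t. Tv d v (ddiag T (path_model X) t)) (Tv d v (X 0)) Z) \<and>
         (\<forall>Z. ode_sol d T (\<lambda>t. Tv d v (ddiag T (path_model X) t)) (Tv d v (X 0)) Z \<longrightarrow>
            (\<forall>t\<in>{0..T}. grouplike d (Z t) \<and> Z t = Tv d v (X t)) \<and> sgrp d T Z \<and>
            (\<forall>s\<in>{0..T}. \<forall>t\<in>{0..T}. path_model Z s t = Tv d v (path_model X s t)))) \<and>
      (\<forall>X. sgrm d T X \<longrightarrow>
         (\<exists>Z. ode_sol d T (\<lambda>t. Tv d v (ddiag T (path_model (X 0)) t)) (Tv d v (X 0 0)) Z) \<and>
         (\<forall>Z. ode_sol d T (\<lambda>t. Tv d v (ddiag T (path_model (X 0)) t)) (Tv d v (X 0 0)) Z \<longrightarrow>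
            sgrm d T (path_model Z) \<and>
            (\<forall>s\<in>{0..T}. \<forall>t\<in>{0..T}. path_model Z s t = Tv d v (X s t))))) \<and>
    ((\<forall>i\<in>{1..d}. v i \<in> lie_poly d) \<longrightarrow>
      (\<forall>X. sgrm d T X \<and> good d T X \<longrightarrow> good d T (\<lambda>s t. Tv d v (X s t))) \<and>
      (\<forall>N Y X. Nsgrm d T N Y \<and> is_MinExt d T N Y X \<longrightarrow>
         (let N' = (LEAST n. \<forall>i\<in>{1..d}. v i \<in> lie_truncN d n); M = N * N' in
          (\<forall>x y a b. inTN d M x \<and> inTN d M y \<longrightarrow>
              inTN d M (TvM d v M x) \<and>
              TvM d v M (tmulN M x y) = tmulN M (TvM d v M x) (TvM d v M y) \<and>
              TvM d v M (\<lambda>w. a * x w + b * y w) = (\<lambda>w. a * TvM d v M x w + b * TvM d v M y w)) \<and>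
          TvM d v M tunit = tunit \<and>
          (\<exists>W. ode_solN d T M (\<lambda>t. Tv d v (ddiag T Y t)) tunit W) \<and>
          (\<forall>W. ode_solN d T M (\<lambda>t. Tv d v (ddiag T Y t)) tunit W \<longrightarrow>
             Nsgrp d T M W \<and>
             (\<forall>s\<in>{0..T}. \<forall>t\<in>{0..T}.
                path_modelN M W s t = TvM d v M (trunc M (X s t)) \<and>
                path_modelN M W s t = trunc M (Tv d v (X s t)))))))"
proof (intro conjI impI, goal_cases)
  case 1
  then have v: "primitive_subst d v" by (rule lie_series_primitive_subst)
  show ?case
    using ode_sol_Tv_sgrp(1)[OF assms(2) primitive_subst_admissible[OF v]]
      sgrp_Tv_solution[OF assms(2) v] by blast
next
  case 2
  then have v: "primitive_subst d v" by (rule lie_series_primitive_subst)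
  show ?case
    using ode_sol_Tv_sgrp(1)[OF assms(2) primitive_subst_admissible[OF v] sgrm_path_sgrp[OF assms(2)]]
      sgrm_Tv_solution[OF assms(2) v] by blast
next
  case 3
  then show ?case using good_Tv[OF assms(2)] by blast
next
  case 4
  then have v: "admissible_subst d v"
    by (intro primitive_subst_admissible lie_poly_primitive_subst)
  show ?case
    using ode_solN_MinExt_Tv[OF assms(2) v] truncated_Tv_solution[OF assms(2) 4]
    by (simp add: Let_def inTN_TvM[OF v] TvM_tmulN[OF v] TvM_lin TvM_tunit) blast
qed

end
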